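(* Let $R$ be a simple Bezout domain. Then $R$ is a D-K elementary divisor ring if and only if for every nonzero $a\in R$ there exist $u_1,u_2,v_1,v_2\in R$ such that $u_1av_1+u_2av_2=1$.
   Context: All rings are associative with nonzero identity. A simple ring is one with no two-sided ideals other than $0$ and $R$. A Bezout domain is a domain in which every finitely generated right ideal and every finitely generated left ideal is principal. A nonzero element $a$ is invariant if $aR=Ra$. For $x\in R$, $RxR$ denotes the two-sided ideal generated by $x$. Two matrices $A,B$ over $R$ are equivalent if $B=PAQ$ for invertible $P,Q$. $R$ is a D-K elementary divisor ring if every (rectangular) matrix over $R$ is equivalent to a matrix $\mathrm{diag}(\varepsilon_1,\dots,\varepsilon_r,0,\dots,0)$ such that $R\varepsilon_{i+1}R\subseteq \varepsilon_iR\cap R\varepsilon_i$ for $i=1,\dots,r-1$ and $\varepsilon_1,\dots,\varepsilon_{r-1}$ are invariant elements. *)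

theory Defs
  imports "Jordan_Normal_Form.Matrix"
begin

definition two_sided_ideal :: "'a::ring_1 set \<Rightarrow> bool" where
  "two_sided_ideal I \<longleftrightarrow> 0 \<in> I \<and> (\<forall>x\<in>I. \<forall>y\<in>I. x + y \<in> I) \<and> (\<forall>x\<in>I. - x \<in> I)
     \<and> (\<forall>x\<in>I. \<forall>r. r * x \<in> I \<and> x * r \<in> I)"

definition simple_ring :: "'a::ring_1 itself \<Rightarrow> bool" where
  "simple_ring TYPE('a) \<longleftrightarrow> (0::'a) \<noteq> 1 \<and>
     (\<forall>I::'a set. two_sided_ideal I \<longrightarrow> I = {0} \<or> I = UNIV)"

definition is_domain :: "'a::ring_1 itself \<Rightarrow> bool" where
  "is_domain TYPE('a) \<longleftrightarrow> (0::'a) \<noteq> 1 \<and> (\<forall>a b::'a. a * b = 0 \<longrightarrow> a = 0 \<or> b = 0)"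

definition right_ideal_gen :: "'a::ring_1 list \<Rightarrow> 'a set" where
  "right_ideal_gen xs = {\<Sum>i<length xs. xs ! i * r i | r. True}"

definition left_ideal_gen :: "'a::ring_1 list \<Rightarrow> 'a set" where
  "left_ideal_gen xs = {\<Sum>i<length xs. r i * xs ! i | r. True}"

definition bezout_domain :: "'a::ring_1 itself \<Rightarrow> bool" where
  "bezout_domain TYPE('a) \<longleftrightarrow> is_domain TYPE('a) \<and>
     (\<forall>xs::'a list. (\<exists>d. right_ideal_gen xs = {d * r | r. True})
                  \<and> (\<exists>d. left_ideal_gen xs = {r * d | r. True}))"

definition invariant_elem :: "'a::ring_1 \<Rightarrow> bool" where
  "invariant_elem a \<longleftrightarrow> a \<noteq> 0 \<and> {a * r | r. True} = {r * a | r. True}"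

definition two_sided_gen :: "'a::ring_1 \<Rightarrow> 'a set" where
  "two_sided_gen x = {\<Sum>i<n. r i * x * s i | (n::nat) r s. True}"

definition DK_elementary_divisor_ring :: "'a::ring_1 itself \<Rightarrow> bool" where
  "DK_elementary_divisor_ring TYPE('a) \<longleftrightarrow>
     (\<forall>m n (A::'a mat). A \<in> carrier_mat m n \<longrightarrow>
        (\<exists>P Q k (eps::nat \<Rightarrow> 'a).
           P \<in> carrier_mat m m \<and> Q \<in> carrier_mat n n \<and>
           invertible_mat P \<and> invertible_mat Q \<and>
           k \<le> min m n \<and>
           P * A * Q = mat m n (\<lambda>(i, j). if i = j \<and> i < k then eps i else 0) \<and>
           (\<forall>i. i + 1 < k \<longrightarrow>
              two_sided_gen (eps (i + 1)) \<subseteq> {eps i * r | r. True} \<inter> {r * eps i | r. True}) \<and>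
           (\<forall>i. i + 1 < k \<longrightarrow> invariant_elem (eps i))))"

end

theory Submission
  imports Defs
begin

text \<open>Necessity: the D-K property applied to diag(a, a) gives invertible P, Q with
  P diag(a, a) Q = diag(e1, e2). Here e2 \<noteq> 0, so simplicity gives 1 \<in> R e2 R \<subseteq> e1 R, and writing
  out the corner entry e1 = p11 a q11 + p12 a q21 yields 1 = u1 a v1 + u2 a v2.

  Sufficiency: in a Bezout domain every pair (a, b) is carried to (d, 0) by an invertible 2 \<times> 2
  matrix acting from the right (dually from the left), and unimodular rows and columns extend to
  invertible matrices. Hence a nonzero matrix is equivalent to one with first row (d, 0, ..., 0),
  d \<noteq> 0. If some entry b outside the first row and column is nonzero, the hypothesis applied to a
  nonzero common right multiple of d and b produces 2 \<times> 2 transformations putting 1 in the corner,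
  which then clears the first row and column; otherwise clearing the first column leaves e \<oplus> 0.
  Induction on the size gives diag(1, ..., 1, e, 0, ..., 0), for which the D-K conditions are trivial.\<close>

section \<open>Bezout domains and 2 \<times> 2 matrices\<close>

lemma domain_nontrivial: "is_domain TYPE('a::ring_1) \<Longrightarrow> (0::'a) \<noteq> 1"
  unfolding is_domain_def by auto

lemma domain_mult_eq_0_iff:
  "is_domain TYPE('a::ring_1) \<Longrightarrow> (a::'a) * b = 0 \<longleftrightarrow> a = 0 \<or> b = 0"
  unfolding is_domain_def by auto

lemma domain_mult_left_cancel:
  fixes a x y :: "'a::ring_1"
  assumes "is_domain TYPE('a)" "a \<noteq> 0" "a * x = a * y"
  shows "x = y"
proof -
  have "a * (x - y) = 0" using assms(3) by (simp add: right_diff_distrib)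
  then show ?thesis using assms(1,2) by (simp add: domain_mult_eq_0_iff)
qed

lemma domain_mult_right_cancel:
  fixes a x y :: "'a::ring_1"
  assumes "is_domain TYPE('a)" "a \<noteq> 0" "x * a = y * a"
  shows "x = y"
proof -
  have "(x - y) * a = 0" using assms(3) by (simp add: left_diff_distrib)
  then show ?thesis using assms(1,2) by (simp add: domain_mult_eq_0_iff)
qed

lemma domain_right_inverse_imp_left_inverse:
  fixes d z :: "'a::ring_1"
  assumes "is_domain TYPE('a)" "d * z = 1"
  shows "z * d = 1"
proof -
  have "d \<noteq> 0" using assms domain_nontrivial by force
  moreover have "d * (z * d) = d * 1" using assms(2) by (simp add: mult.assoc[symmetric])
  ultimately show ?thesis using domain_mult_left_cancel[OF assms(1)] by blast
qed

lemma bezout_domain_is_domain: "bezout_domain TYPE('a::ring_1) \<Longrightarrow> is_domain TYPE('a)"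
  unfolding bezout_domain_def by blast

lemma nth_mem_right_ideal_gen:
  fixes xs :: "'a::ring_1 list"
  assumes "i < length xs"
  shows "xs ! i \<in> right_ideal_gen xs"
proof -
  have "(\<Sum>k<length xs. xs ! k * (if k = i then 1 else 0)) = xs ! i"
    using assms by (simp add: if_distrib[of "\<lambda>c. _ * c"] cong: if_cong)
  then show ?thesis
    unfolding right_ideal_gen_def by (intro CollectI exI[of _ "\<lambda>k. if k = i then 1 else 0"]) simp
qed

lemma nth_mem_left_ideal_gen:
  fixes xs :: "'a::ring_1 list"
  assumes "i < length xs"
  shows "xs ! i \<in> left_ideal_gen xs"
proof -
  have "(\<Sum>k<length xs. (if k = i then 1 else 0) * xs ! k) = xs ! i"
    using assms by (simp add: if_distrib[of "\<lambda>c. c * _"] cong: if_cong)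
  then show ?thesis
    unfolding left_ideal_gen_def by (intro CollectI exI[of _ "\<lambda>k. if k = i then 1 else 0"]) simp
qed

lemma bezout_right_gcd:
  fixes a b :: "'a::ring_1"
  assumes "bezout_domain TYPE('a)"
  obtains d a1 b1 x y where "a = d * a1" "b = d * b1" "d = a * x + b * y"
proof -
  obtain d where d: "right_ideal_gen [a, b] = {d * r | r. True}"
    using assms unfolding bezout_domain_def by blast
  have "a \<in> right_ideal_gen [a, b]" "b \<in> right_ideal_gen [a, b]"
    using nth_mem_right_ideal_gen[of 0 "[a, b]"] nth_mem_right_ideal_gen[of 1 "[a, b]"] by simp_all
  then obtain a1 b1 where "a = d * a1" "b = d * b1" using d by auto
  moreover have "d \<in> right_ideal_gen [a, b]" using d by (auto intro: exI[of _ 1])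
  then obtain r where "d = (\<Sum>i<length [a, b]. [a, b] ! i * r i)"
    unfolding right_ideal_gen_def by blast
  then have "d = a * r 0 + b * r 1" by (simp add: numeral_2_eq_2)
  ultimately show ?thesis using that by blast
qed

lemma bezout_left_gcd:
  fixes a b :: "'a::ring_1"
  assumes "bezout_domain TYPE('a)"
  obtains d a1 b1 x y where "a = a1 * d" "b = b1 * d" "d = x * a + y * b"
proof -
  obtain d where d: "left_ideal_gen [a, b] = {r * d | r. True}"
    using assms unfolding bezout_domain_def by blast
  have "a \<in> left_ideal_gen [a, b]" "b \<in> left_ideal_gen [a, b]"
    using nth_mem_left_ideal_gen[of 0 "[a, b]"] nth_mem_left_ideal_gen[of 1 "[a, b]"] by simp_all
  then obtain a1 b1 where "a = a1 * d" "b = b1 * d" using d by auto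
  moreover have "d \<in> left_ideal_gen [a, b]" using d by (auto intro: exI[of _ 1])
  then obtain r where "d = (\<Sum>i<length [a, b]. r i * [a, b] ! i)"
    unfolding left_ideal_gen_def by blast
  then have "d = r 0 * a + r 1 * b" by (simp add: numeral_2_eq_2)
  ultimately show ?thesis using that by blast
qed

definition mat2 :: "'a \<Rightarrow> 'a \<Rightarrow> 'a \<Rightarrow> 'a \<Rightarrow> 'a mat" where
  "mat2 p q r s = mat 2 2 (\<lambda>(i, j). if i = 0 then (if j = 0 then p else q) else (if j = 0 then r else s))"

lemma mat2_carrier [simp]: "mat2 p q r s \<in> carrier_mat 2 2"
  by (simp add: mat2_def)

lemma mat2_dim [simp]: "dim_row (mat2 p q r s) = 2" "dim_col (mat2 p q r s) = 2"
  by (simp_all add: mat2_def)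

lemma mat2_index [simp]:
  "mat2 p q r s $$ (0, 0) = p" "mat2 p q r s $$ (0, 1) = q"
  "mat2 p q r s $$ (1, 0) = r" "mat2 p q r s $$ (1, 1) = s"
  "mat2 p q r s $$ (0, Suc 0) = q" "mat2 p q r s $$ (Suc 0, 0) = r" "mat2 p q r s $$ (Suc 0, Suc 0) = s"
  by (simp_all add: mat2_def)

lemma carrier_mat2_cases:
  assumes "X \<in> carrier_mat 2 2"
  obtains p q r s where "X = mat2 p q r s"
proof
  show "X = mat2 (X $$ (0, 0)) (X $$ (0, 1)) (X $$ (1, 0)) (X $$ (1, 1))"
  proof (rule eq_matI)
    fix i j assume "i < dim_row (mat2 (X $$ (0, 0)) (X $$ (0, 1)) (X $$ (1, 0)) (X $$ (1, 1)))"
      "j < dim_col (mat2 (X $$ (0, 0)) (X $$ (0, 1)) (X $$ (1, 0)) (X $$ (1, 1)))"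
    then have "i = 0 \<or> i = 1" "j = 0 \<or> j = 1" by auto
    then show "X $$ (i, j) = mat2 (X $$ (0, 0)) (X $$ (0, 1)) (X $$ (1, 0)) (X $$ (1, 1)) $$ (i, j)"
      by auto
  qed (use assms in auto)
qed

lemma mat2_eq_iff: "mat2 p q r s = mat2 p' q' r' s' \<longleftrightarrow> p = p' \<and> q = q' \<and> r = r' \<and> s = s'"
  by (metis mat2_index(1,4-6))

lemma mat2_mult:
  fixes p q r s p' q' r' s' :: "'a::ring_1"
  shows "mat2 p q r s * mat2 p' q' r' s' =
    mat2 (p * p' + q * r') (p * q' + q * s') (r * p' + s * r') (r * q' + s * s')"
  by (rule eq_matI) (auto simp: mat2_def scalar_prod_def numeral_2_eq_2 less_Suc_eq)

lemma one_mat2: "(1\<^sub>m 2 :: 'a::ring_1 mat) = mat2 1 0 0 1"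
  by (rule eq_matI) (auto simp: mat2_def numeral_2_eq_2 less_Suc_eq)

lemma mat2_mult_eq_one_mat_iff:
  fixes p q r s p' q' r' s' :: "'a::ring_1"
  shows "mat2 p q r s * mat2 p' q' r' s' = 1\<^sub>m 2 \<longleftrightarrow>
    p * p' + q * r' = 1 \<and> p * q' + q * s' = 0 \<and> r * p' + s * r' = 0 \<and> r * q' + s * s' = 1"
  by (simp add: mat2_mult one_mat2 mat2_eq_iff)

lemma invertible_mat_inverse:
  fixes P :: "'a::ring_1 mat"
  assumes "invertible_mat P" "P \<in> carrier_mat n n"
  obtains P' where "P' \<in> carrier_mat n n" "P * P' = 1\<^sub>m n" "P' * P = 1\<^sub>m n"
proof -
  obtain B where B: "P * B = 1\<^sub>m n" "B * P = 1\<^sub>m (dim_row B)"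
    using assms unfolding invertible_mat_def inverts_mat_def by auto
  have "dim_col B = n" using B(1) assms(2) by (metis index_mult_mat(3) index_one_mat(3))
  moreover have "dim_row B = n"
    using B(2) assms(2) by (metis index_mult_mat(3) index_one_mat(3) carrier_matD(2))
  ultimately have "B \<in> carrier_mat n n" by auto
  then show ?thesis using B that by auto
qed

lemma invertible_matI:
  fixes P :: "'a::ring_1 mat"
  assumes "P \<in> carrier_mat n n" "P' \<in> carrier_mat n n" "P * P' = 1\<^sub>m n" "P' * P = 1\<^sub>m n"
  shows "invertible_mat P"
  using assms unfolding invertible_mat_def inverts_mat_def by auto

lemma invertible_one_mat: "invertible_mat (1\<^sub>m n :: 'a::ring_1 mat)"
  by (rule invertible_matI[of _ n "1\<^sub>m n"]) auto

lemma invertible_mult_mat: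
  fixes P Q :: "'a::ring_1 mat"
  assumes "invertible_mat P" "invertible_mat Q" "P \<in> carrier_mat n n" "Q \<in> carrier_mat n n"
  shows "invertible_mat (P * Q)"
proof -
  obtain P' where P': "P' \<in> carrier_mat n n" "P * P' = 1\<^sub>m n" "P' * P = 1\<^sub>m n"
    using invertible_mat_inverse[OF assms(1,3)] .
  obtain Q' where Q': "Q' \<in> carrier_mat n n" "Q * Q' = 1\<^sub>m n" "Q' * Q = 1\<^sub>m n"
    using invertible_mat_inverse[OF assms(2,4)] .
  have "(P * Q) * (Q' * P') = P * (Q * (Q' * P'))"
    by (rule assoc_mult_mat) (use assms P' Q' in auto)
  also have "Q * (Q' * P') = (Q * Q') * P'"
    by (rule assoc_mult_mat[symmetric]) (use assms P' Q' in auto)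
  finally have right: "(P * Q) * (Q' * P') = 1\<^sub>m n"
    using P' Q' by (simp del: assoc_mult_mat)
  have "(Q' * P') * (P * Q) = Q' * (P' * (P * Q))"
    by (rule assoc_mult_mat) (use assms P' Q' in auto)
  also have "P' * (P * Q) = (P' * P) * Q"
    by (rule assoc_mult_mat[symmetric]) (use assms P' Q' in auto)
  finally have left: "(Q' * P') * (P * Q) = 1\<^sub>m n"
    using P'(3) Q'(3) assms(4) by (simp del: assoc_mult_mat)
  show ?thesis
    by (rule invertible_matI[OF mult_carrier_mat[OF assms(3,4)] mult_carrier_mat[OF Q'(1) P'(1)] right left])
qed

lemma invertible_mat2I:
  fixes p q r s p' q' r' s' :: "'a::ring_1"
  assumes "mat2 p q r s * mat2 p' q' r' s' = 1\<^sub>m 2" "mat2 p' q' r' s' * mat2 p q r s = 1\<^sub>m 2"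
  shows "invertible_mat (mat2 p q r s)"
  using invertible_matI[OF mat2_carrier mat2_carrier assms] .

lemma invertible_mat2E:
  fixes P :: "'a::ring_1 mat"
  assumes "invertible_mat P" "P \<in> carrier_mat 2 2"
  obtains p q r s where "P * mat2 p q r s = 1\<^sub>m 2" "mat2 p q r s * P = 1\<^sub>m 2"
proof -
  obtain P' where P': "P' \<in> carrier_mat 2 2" "P * P' = 1\<^sub>m 2" "P' * P = 1\<^sub>m 2"
    using invertible_mat_inverse[OF assms] .
  then obtain p q r s where "P' = mat2 p q r s" using carrier_mat2_cases by blast
  then show ?thesis using P' that by simp
qed

lemma bezout_unimodular_column_complement:
  fixes a1 b1 x y :: "'a::ring_1"
  assumes bez: "bezout_domain TYPE('a)" and unimod: "a1 * x + b1 * y = 1" and "b1 \<noteq> 0"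
  obtains s t c e where "mat2 x s y t * mat2 a1 b1 c e = 1\<^sub>m 2" "a1 * s + b1 * t = 0"
proof -
  have dom: "is_domain TYPE('a)" using bezout_domain_is_domain[OF bez] .
  \<comment> \<open>s (c e) is a right gcd factorisation of the first row of the idempotent I - (x; y) (a1 b1),
    and (s; t) is the matching combination of its columns.\<close>
  obtain s c e z1 z2 where sce: "1 - x * a1 = s * c" "- (x * b1) = s * e"
    "s = (1 - x * a1) * z1 + (- (x * b1)) * z2"
    using bezout_right_gcd[OF bez, of "1 - x * a1" "- (x * b1)"] by metis
  define t where "t = - (y * a1) * z1 + (1 - y * b1) * z2"
  have row1: "a1 * (1 - x * a1) + b1 * (- (y * a1)) = 0"
  proof -
    have "a1 * (1 - x * a1) + b1 * (- (y * a1)) = (1 - (a1 * x + b1 * y)) * a1"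
      by (simp add: algebra_simps)
    then show ?thesis using unimod by simp
  qed
  have row2: "a1 * (- (x * b1)) + b1 * (1 - y * b1) = 0"
  proof -
    have "a1 * (- (x * b1)) + b1 * (1 - y * b1) = (1 - (a1 * x + b1 * y)) * b1"
      by (simp add: algebra_simps)
    then show ?thesis using unimod by simp
  qed
  have annih: "a1 * s + b1 * t = 0"
  proof -
    have "a1 * s + b1 * t = (a1 * (1 - x * a1) + b1 * (- (y * a1))) * z1
        + (a1 * (- (x * b1)) + b1 * (1 - y * b1)) * z2"
      unfolding sce(3) t_def by (simp add: algebra_simps)
    then show ?thesis using row1 row2 by simp
  qed
  then have annih': "a1 * s = - (b1 * t)" by (simp add: eq_neg_iff_add_eq_0)
  have tc: "- (y * a1) = t * c"
  proof -
    have "b1 * (- (y * a1)) = - (a1 * (1 - x * a1))"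
      using row1 by (simp add: eq_neg_iff_add_eq_0 add.commute)
    also have "\<dots> = b1 * (t * c)" using sce(1) annih' by (simp flip: mult.assoc)
    finally show ?thesis using domain_mult_left_cancel[OF dom \<open>b1 \<noteq> 0\<close>] by blast
  qed
  have te: "1 - y * b1 = t * e"
  proof -
    have "b1 * (1 - y * b1) = - (a1 * (- (x * b1)))"
      using row2 by (simp add: eq_neg_iff_add_eq_0 add.commute)
    also have "\<dots> = b1 * (t * e)" using sce(2) annih' by (simp flip: mult.assoc)
    finally show ?thesis using domain_mult_left_cancel[OF dom \<open>b1 \<noteq> 0\<close>] by blast
  qed
  have "x * a1 + s * c = 1" "x * b1 + s * e = 0" "y * a1 + t * c = 0" "y * b1 + t * e = 1"
    by (simp_all flip: sce(1,2) tc te)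
  then show ?thesis
    using annih by (intro that[where s = s and t = t and c = c and e = e]) (simp_all add: mat2_mult_eq_one_mat_iff)
qed

lemma domain_mat2_right_inverse_imp_left_inverse:
  fixes a1 b1 c e x y s t :: "'a::ring_1"
  assumes dom: "is_domain TYPE('a)" and "b1 \<noteq> 0"
    and inv: "mat2 x s y t * mat2 a1 b1 c e = 1\<^sub>m 2"
    and unimod: "a1 * x + b1 * y = 1" and annih: "a1 * s + b1 * t = 0"
  shows "mat2 a1 b1 c e * mat2 x s y t = 1\<^sub>m 2"
proof -
  have "x * a1 + s * c = 1" "x * b1 + s * e = 0" using inv by (simp_all add: mat2_mult_eq_one_mat_iff)
  then have sc: "s * c = 1 - x * a1" and se: "s * e = - (x * b1)"
    by (metis add_diff_cancel_left', metis neg_eq_iff_add_eq_0)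
  have "s \<noteq> 0"
  proof
    assume "s = 0"
    then have "x * a1 = 1" "x * b1 = 0" using sc se by auto
    then show False
      using \<open>b1 \<noteq> 0\<close> domain_nontrivial[OF dom] by (auto simp: domain_mult_eq_0_iff[OF dom])
  qed
  have "s * (c * x + e * y) = (s * c) * x + (s * e) * y" by (simp add: algebra_simps)
  also have "\<dots> = x - x * (a1 * x + b1 * y)" unfolding sc se by (simp add: algebra_simps)
  also have "\<dots> = s * 0" using unimod by simp
  finally have cx: "c * x + e * y = 0" using domain_mult_left_cancel[OF dom \<open>s \<noteq> 0\<close>] by blast
  have "s * (c * s + e * t) = (s * c) * s + (s * e) * t" by (simp add: algebra_simps)
  also have "\<dots> = s - x * (a1 * s + b1 * t)" unfolding sc se by (simp add: algebra_simps)
  also have "\<dots> = s * 1" using annih by simp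
  finally have cs: "c * s + e * t = 1" using domain_mult_left_cancel[OF dom \<open>s \<noteq> 0\<close>] by blast
  show ?thesis using unimod annih cx cs by (simp add: mat2_mult_eq_one_mat_iff)
qed

lemma unimodular_column_completion:
  fixes a1 b1 x y :: "'a::ring_1"
  assumes bez: "bezout_domain TYPE('a)" and unimod: "a1 * x + b1 * y = 1"
  obtains s t c e where "mat2 x s y t * mat2 a1 b1 c e = 1\<^sub>m 2" "mat2 a1 b1 c e * mat2 x s y t = 1\<^sub>m 2"
proof (cases "b1 = 0")
  case True
  have "a1 * x = 1" using unimod True by simp
  moreover have "x * a1 = 1"
    using domain_right_inverse_imp_left_inverse[OF bezout_domain_is_domain[OF bez]] calculation .
  ultimately show ?thesis
    using True by (intro that[where s = 0 and t = 1 and c = "- (y * a1)" and e = 1])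
      (simp_all add: mat2_mult_eq_one_mat_iff mult.assoc)
next
  case False
  obtain s t c e where "mat2 x s y t * mat2 a1 b1 c e = 1\<^sub>m 2" "a1 * s + b1 * t = 0"
    by (rule bezout_unimodular_column_complement[OF bez unimod False])
  then show ?thesis
    using domain_mat2_right_inverse_imp_left_inverse[OF bezout_domain_is_domain[OF bez] False _ unimod] that
    by blast
qed

lemma bezout_unimodular_row_complement:
  fixes a1 b1 x y :: "'a::ring_1"
  assumes bez: "bezout_domain TYPE('a)" and unimod: "x * a1 + y * b1 = 1" and "b1 \<noteq> 0"
  obtains s t c e where "mat2 a1 c b1 e * mat2 x y s t = 1\<^sub>m 2" "s * a1 + t * b1 = 0"
proof -
  have dom: "is_domain TYPE('a)" using bezout_domain_is_domain[OF bez] .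
  obtain s c e z1 z2 where sce: "1 - a1 * x = c * s" "- (b1 * x) = e * s"
    "s = z1 * (1 - a1 * x) + z2 * (- (b1 * x))"
    using bezout_left_gcd[OF bez, of "1 - a1 * x" "- (b1 * x)"] by metis
  define t where "t = z1 * (- (a1 * y)) + z2 * (1 - b1 * y)"
  have col1: "(1 - a1 * x) * a1 + (- (a1 * y)) * b1 = 0"
  proof -
    have "(1 - a1 * x) * a1 + (- (a1 * y)) * b1 = a1 * (1 - (x * a1 + y * b1))"
      by (simp add: algebra_simps)
    then show ?thesis using unimod by simp
  qed
  have col2: "(- (b1 * x)) * a1 + (1 - b1 * y) * b1 = 0"
  proof -
    have "(- (b1 * x)) * a1 + (1 - b1 * y) * b1 = b1 * (1 - (x * a1 + y * b1))"
      by (simp add: algebra_simps)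
    then show ?thesis using unimod by simp
  qed
  have annih: "s * a1 + t * b1 = 0"
  proof -
    have "s * a1 + t * b1 = z1 * ((1 - a1 * x) * a1 + (- (a1 * y)) * b1)
        + z2 * ((- (b1 * x)) * a1 + (1 - b1 * y) * b1)"
      unfolding sce(3) t_def by (simp add: algebra_simps)
    then show ?thesis using col1 col2 by simp
  qed
  then have annih': "s * a1 = - (t * b1)" by (simp add: eq_neg_iff_add_eq_0)
  have ct: "- (a1 * y) = c * t"
  proof -
    have "(- (a1 * y)) * b1 = - ((1 - a1 * x) * a1)"
      using col1 by (simp add: eq_neg_iff_add_eq_0 add.commute)
    also have "\<dots> = (c * t) * b1" using sce(1) annih' by (simp add: mult.assoc)
    finally show ?thesis using domain_mult_right_cancel[OF dom \<open>b1 \<noteq> 0\<close>] by blast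
  qed
  have et: "1 - b1 * y = e * t"
  proof -
    have "(1 - b1 * y) * b1 = - ((- (b1 * x)) * a1)"
      using col2 by (simp add: eq_neg_iff_add_eq_0 add.commute)
    also have "\<dots> = (e * t) * b1" using sce(2) annih' by (simp add: mult.assoc)
    finally show ?thesis using domain_mult_right_cancel[OF dom \<open>b1 \<noteq> 0\<close>] by blast
  qed
  have "a1 * x + c * s = 1" "b1 * x + e * s = 0" "a1 * y + c * t = 0" "b1 * y + e * t = 1"
    by (simp_all flip: sce(1,2) ct et)
  then show ?thesis
    using annih by (intro that[where s = s and t = t and c = c and e = e]) (simp_all add: mat2_mult_eq_one_mat_iff)
qed

lemma domain_mat2_left_inverse_imp_right_inverse:
  fixes a1 b1 c e x y s t :: "'a::ring_1"
  assumes dom: "is_domain TYPE('a)" and "b1 \<noteq> 0"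
    and inv: "mat2 a1 c b1 e * mat2 x y s t = 1\<^sub>m 2"
    and unimod: "x * a1 + y * b1 = 1" and annih: "s * a1 + t * b1 = 0"
  shows "mat2 x y s t * mat2 a1 c b1 e = 1\<^sub>m 2"
proof -
  have "a1 * x + c * s = 1" "b1 * x + e * s = 0" using inv by (simp_all add: mat2_mult_eq_one_mat_iff)
  then have cs: "c * s = 1 - a1 * x" and es: "e * s = - (b1 * x)"
    by (metis add_diff_cancel_left', metis neg_eq_iff_add_eq_0)
  have "s \<noteq> 0"
  proof
    assume "s = 0"
    then have "a1 * x = 1" "b1 * x = 0" using cs es by auto
    then show False
      using \<open>b1 \<noteq> 0\<close> domain_nontrivial[OF dom] by (auto simp: domain_mult_eq_0_iff[OF dom])
  qed
  have "(x * c + y * e) * s = x * (c * s) + y * (e * s)" by (simp add: algebra_simps)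
  also have "\<dots> = x - (x * a1 + y * b1) * x" unfolding cs es by (simp add: algebra_simps)
  also have "\<dots> = 0 * s" using unimod by simp
  finally have xc: "x * c + y * e = 0" using domain_mult_right_cancel[OF dom \<open>s \<noteq> 0\<close>] by blast
  have "(s * c + t * e) * s = s * (c * s) + t * (e * s)" by (simp add: algebra_simps)
  also have "\<dots> = s - (s * a1 + t * b1) * x" unfolding cs es by (simp add: algebra_simps)
  also have "\<dots> = 1 * s" using annih by simp
  finally have sc: "s * c + t * e = 1" using domain_mult_right_cancel[OF dom \<open>s \<noteq> 0\<close>] by blast
  show ?thesis using unimod annih xc sc by (simp add: mat2_mult_eq_one_mat_iff)
qed

lemma unimodular_row_completion:
  fixes a1 b1 x y :: "'a::ring_1"
  assumes bez: "bezout_domain TYPE('a)" and unimod: "x * a1 + y * b1 = 1"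
  obtains s t c e where "mat2 a1 c b1 e * mat2 x y s t = 1\<^sub>m 2" "mat2 x y s t * mat2 a1 c b1 e = 1\<^sub>m 2"
proof (cases "b1 = 0")
  case True
  have "x * a1 = 1" using unimod True by simp
  moreover have "a1 * x = 1"
    using domain_right_inverse_imp_left_inverse[OF bezout_domain_is_domain[OF bez]] calculation .
  ultimately show ?thesis
    using True by (intro that[where s = 0 and t = 1 and c = "- (a1 * y)" and e = 1])
      (simp_all add: mat2_mult_eq_one_mat_iff flip: mult.assoc)
next
  case False
  obtain s t c e where "mat2 a1 c b1 e * mat2 x y s t = 1\<^sub>m 2" "s * a1 + t * b1 = 0"
    by (rule bezout_unimodular_row_complement[OF bez unimod False])
  then show ?thesis
    using domain_mat2_left_inverse_imp_right_inverse[OF bezout_domain_is_domain[OF bez] False _ unimod] that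
    by blast
qed

lemma bezout_right_reduction:
  fixes a b :: "'a::ring_1"
  assumes bez: "bezout_domain TYPE('a)"
  obtains x s y t where "invertible_mat (mat2 x s y t)" "a * s + b * t = 0"
proof -
  have dom: "is_domain TYPE('a)" using bezout_domain_is_domain[OF bez] .
  obtain d a1 b1 x y where ab: "a = d * a1" "b = d * b1" "d = a * x + b * y"
    using bezout_right_gcd[OF bez] .
  show ?thesis
  proof (cases "d = 0")
    case True
    then show ?thesis
      using ab(1,2) invertible_one_mat[of 2] by (intro that[of 1 0 0 1]) (simp_all flip: one_mat2)
  next
    case False
    have "d * (a1 * x + b1 * y) = (d * a1) * x + (d * b1) * y" by (simp add: algebra_simps)
    also have "\<dots> = d * 1" unfolding ab(1,2)[symmetric] using ab(3) by simp
    finally have "d * (a1 * x + b1 * y) = d * 1" .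
    then have "a1 * x + b1 * y = 1" using domain_mult_left_cancel[OF dom False] by blast
    then obtain s t c e where inv: "mat2 x s y t * mat2 a1 b1 c e = 1\<^sub>m 2"
      "mat2 a1 b1 c e * mat2 x s y t = 1\<^sub>m 2"
      by (rule unimodular_column_completion[OF bez])
    then have "a1 * s + b1 * t = 0" unfolding mat2_mult_eq_one_mat_iff by blast
    moreover have "a * s + b * t = d * (a1 * s + b1 * t)" using ab(1,2) by (simp add: algebra_simps)
    ultimately have "a * s + b * t = 0" by simp
    then show ?thesis using that invertible_mat2I[OF inv] by blast
  qed
qed

lemma bezout_left_reduction:
  fixes a b :: "'a::ring_1"
  assumes bez: "bezout_domain TYPE('a)"
  obtains x y s t where "invertible_mat (mat2 x y s t)" "s * a + t * b = 0"
proof -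
  have dom: "is_domain TYPE('a)" using bezout_domain_is_domain[OF bez] .
  obtain d a1 b1 x y where ab: "a = a1 * d" "b = b1 * d" "d = x * a + y * b"
    using bezout_left_gcd[OF bez] .
  show ?thesis
  proof (cases "d = 0")
    case True
    then show ?thesis
      using ab(1,2) invertible_one_mat[of 2] by (intro that[of 1 0 0 1]) (simp_all flip: one_mat2)
  next
    case False
    have "(x * a1 + y * b1) * d = x * (a1 * d) + y * (b1 * d)" by (simp add: algebra_simps)
    also have "\<dots> = 1 * d" unfolding ab(1,2)[symmetric] using ab(3) by simp
    finally have "(x * a1 + y * b1) * d = 1 * d" .
    then have "x * a1 + y * b1 = 1" using domain_mult_right_cancel[OF dom False] by blast
    then obtain s t c e where inv: "mat2 a1 c b1 e * mat2 x y s t = 1\<^sub>m 2"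
      "mat2 x y s t * mat2 a1 c b1 e = 1\<^sub>m 2"
      by (rule unimodular_row_completion[OF bez])
    then have "s * a1 + t * b1 = 0" unfolding mat2_mult_eq_one_mat_iff by blast
    moreover have "s * a + t * b = (s * a1 + t * b1) * d" using ab(1,2) by (simp add: algebra_simps)
    ultimately have "s * a + t * b = 0" by simp
    then show ?thesis using that invertible_mat2I[OF inv(2,1)] by blast
  qed
qed

lemma unimodular_row_extends_to_invertible:
  fixes u1 u2 w1 w2 :: "'a::ring_1"
  assumes bez: "bezout_domain TYPE('a)" and unimod: "u1 * w1 + u2 * w2 = 1"
  obtains r s where "invertible_mat (mat2 u1 u2 r s)"
proof -
  obtain x s0 y t0 where Q: "invertible_mat (mat2 x s0 y t0)" "u1 * s0 + u2 * t0 = 0"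
    by (rule bezout_right_reduction[OF bez])
  obtain p q r s where inv: "mat2 x s0 y t0 * mat2 p q r s = 1\<^sub>m 2" "mat2 p q r s * mat2 x s0 y t0 = 1\<^sub>m 2"
    by (rule invertible_mat2E[OF Q(1) mat2_carrier])
  have e: "x * p + s0 * r = 1" "x * q + s0 * s = 0" "y * p + t0 * r = 0" "y * q + t0 * s = 1"
    using inv(1) by (simp_all add: mat2_mult_eq_one_mat_iff)
  define \<delta> where "\<delta> = u1 * x + u2 * y"
  have u: "u1 = \<delta> * p" "u2 = \<delta> * q"
  proof -
    have "\<delta> * p = u1 * (x * p + s0 * r) + u2 * (y * p + t0 * r) - (u1 * s0 + u2 * t0) * r"
      unfolding \<delta>_def by (simp add: algebra_simps)
    then show "u1 = \<delta> * p" using e Q(2) by simp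
    have "\<delta> * q = u1 * (x * q + s0 * s) + u2 * (y * q + t0 * s) - (u1 * s0 + u2 * t0) * s"
      unfolding \<delta>_def by (simp add: algebra_simps)
    then show "u2 = \<delta> * q" using e Q(2) by simp
  qed
  have "\<delta> * (p * w1 + q * w2) = (\<delta> * p) * w1 + (\<delta> * q) * w2" by (simp add: algebra_simps)
  then have dz: "\<delta> * (p * w1 + q * w2) = 1" using unimod by (simp flip: u)
  have zd: "(p * w1 + q * w2) * \<delta> = 1"
    using domain_right_inverse_imp_left_inverse[OF bezout_domain_is_domain[OF bez] dz] .
  have "invertible_mat (mat2 \<delta> 0 0 1)"
    by (rule invertible_mat2I[of _ _ _ _ "p * w1 + q * w2" 0 0 1]) (simp_all add: mat2_mult_eq_one_mat_iff dz zd)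
  then have "invertible_mat (mat2 \<delta> 0 0 1 * mat2 p q r s)"
    by (rule invertible_mult_mat[OF _ invertible_mat2I[OF inv(2,1)] mat2_carrier mat2_carrier])
  moreover have "mat2 \<delta> 0 0 1 * mat2 p q r s = mat2 u1 u2 r s" by (simp add: mat2_mult u)
  ultimately show ?thesis by (intro that) simp
qed

lemma unimodular_column_extends_to_invertible:
  fixes z1 z2 x1 x2 :: "'a::ring_1"
  assumes bez: "bezout_domain TYPE('a)" and unimod: "z1 * x1 + z2 * x2 = 1"
  obtains q s where "invertible_mat (mat2 x1 q x2 s)"
proof -
  obtain \<alpha> \<beta> s0 t0 where P: "invertible_mat (mat2 \<alpha> \<beta> s0 t0)" "s0 * x1 + t0 * x2 = 0"
    by (rule bezout_left_reduction[OF bez])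
  obtain p q r s where inv: "mat2 \<alpha> \<beta> s0 t0 * mat2 p q r s = 1\<^sub>m 2" "mat2 p q r s * mat2 \<alpha> \<beta> s0 t0 = 1\<^sub>m 2"
    by (rule invertible_mat2E[OF P(1) mat2_carrier])
  have e: "p * \<alpha> + q * s0 = 1" "p * \<beta> + q * t0 = 0" "r * \<alpha> + s * s0 = 0" "r * \<beta> + s * t0 = 1"
    using inv(2) by (simp_all add: mat2_mult_eq_one_mat_iff)
  define \<delta> where "\<delta> = \<alpha> * x1 + \<beta> * x2"
  have x: "x1 = p * \<delta>" "x2 = r * \<delta>"
  proof -
    have "p * \<delta> = (p * \<alpha> + q * s0) * x1 + (p * \<beta> + q * t0) * x2 - q * (s0 * x1 + t0 * x2)"
      unfolding \<delta>_def by (simp add: algebra_simps)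
    then show "x1 = p * \<delta>" using e P(2) by simp
    have "r * \<delta> = (r * \<alpha> + s * s0) * x1 + (r * \<beta> + s * t0) * x2 - s * (s0 * x1 + t0 * x2)"
      unfolding \<delta>_def by (simp add: algebra_simps)
    then show "x2 = r * \<delta>" using e P(2) by simp
  qed
  have "(z1 * p + z2 * r) * \<delta> = z1 * (p * \<delta>) + z2 * (r * \<delta>)" by (simp add: algebra_simps)
  then have zd: "(z1 * p + z2 * r) * \<delta> = 1" using unimod by (simp flip: x)
  have dz: "\<delta> * (z1 * p + z2 * r) = 1"
    using domain_right_inverse_imp_left_inverse[OF bezout_domain_is_domain[OF bez] zd] .
  have "invertible_mat (mat2 \<delta> 0 0 1)"
    by (rule invertible_mat2I[of _ _ _ _ "z1 * p + z2 * r" 0 0 1]) (simp_all add: mat2_mult_eq_one_mat_iff dz zd)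
  then have "invertible_mat (mat2 p q r s * mat2 \<delta> 0 0 1)"
    by (rule invertible_mult_mat[OF invertible_mat2I[OF inv(2,1)] _ mat2_carrier mat2_carrier])
  moreover have "mat2 p q r s * mat2 \<delta> 0 0 1 = mat2 x1 q x2 s" by (simp add: mat2_mult x)
  ultimately show ?thesis by (intro that) simp
qed

lemma bezout_right_ore:
  fixes a b :: "'a::ring_1"
  assumes bez: "bezout_domain TYPE('a)" and "b \<noteq> 0"
  obtains s t where "s \<noteq> 0" "a * s = b * t"
proof -
  have dom: "is_domain TYPE('a)" using bezout_domain_is_domain[OF bez] .
  obtain x s y t where Q: "invertible_mat (mat2 x s y t)" "a * s + b * t = 0"
    by (rule bezout_right_reduction[OF bez])
  obtain p q r u where "mat2 x s y t * mat2 p q r u = 1\<^sub>m 2" "mat2 p q r u * mat2 x s y t = 1\<^sub>m 2"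
    by (rule invertible_mat2E[OF Q(1) mat2_carrier])
  then have col: "r * s + u * t = 1" unfolding mat2_mult_eq_one_mat_iff by blast
  have "s \<noteq> 0"
  proof
    assume "s = 0"
    then have "t = 0" using Q(2) \<open>b \<noteq> 0\<close> by (simp add: domain_mult_eq_0_iff[OF dom])
    then show False using col \<open>s = 0\<close> domain_nontrivial[OF dom] by simp
  qed
  moreover have "a * s = b * (- t)" using Q(2) by (simp add: eq_neg_iff_add_eq_0)
  ultimately show ?thesis using that by blast
qed

definition two_simple :: "'a::ring_1 itself \<Rightarrow> bool" where
  "two_simple TYPE('a) \<longleftrightarrow> (\<forall>a::'a. a \<noteq> 0 \<longrightarrow> (\<exists>u1 u2 v1 v2. u1 * a * v1 + u2 * a * v2 = 1))"

lemma two_simple_lower_triangular_corner_one: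
  fixes d w b :: "'a::ring_1"
  assumes bez: "bezout_domain TYPE('a)" and ts: "two_simple TYPE('a)"
    and "d \<noteq> 0" "b \<noteq> 0"
  obtains X Y where "X \<in> carrier_mat 2 2" "Y \<in> carrier_mat 2 2" "invertible_mat X" "invertible_mat Y"
    "(X * mat2 d 0 w b * Y) $$ (0, 0) = 1"
proof -
  have dom: "is_domain TYPE('a)" using bezout_domain_is_domain[OF bez] .
  \<comment> \<open>With w \<rho> \<in> b R and m = d \<rho> \<tau> \<in> b R, every u1 m v1 + u2 m v2 lies in (u1 d + u2 w) R + u2 b R.\<close>
  obtain \<rho> \<sigma> where rs: "\<rho> \<noteq> 0" "w * \<rho> = b * \<sigma>"
    using bezout_right_ore[OF bez \<open>b \<noteq> 0\<close>] by metis
  have "d * \<rho> \<noteq> 0" using \<open>d \<noteq> 0\<close> rs(1) by (simp add: domain_mult_eq_0_iff[OF dom])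
  obtain \<tau> \<beta> where tb: "\<tau> \<noteq> 0" "d * \<rho> * \<tau> = b * \<beta>"
    using bezout_right_ore[OF bez \<open>b \<noteq> 0\<close>] by metis
  define m where "m = d * \<rho> * \<tau>"
  have "m \<noteq> 0" unfolding m_def using \<open>d * \<rho> \<noteq> 0\<close> tb(1) by (simp add: domain_mult_eq_0_iff[OF dom])
  then obtain u1 u2 v1 v2 where uv: "u1 * m * v1 + u2 * m * v2 = 1"
    using ts unfolding two_simple_def by blast
  then have "u1 * (m * v1) + u2 * (m * v2) = 1" by (simp add: mult.assoc)
  then obtain r s where X: "invertible_mat (mat2 u1 u2 r s)"
    by (rule unimodular_row_extends_to_invertible[OF bez])
  define x1 where "x1 = \<rho> * \<tau> * v1"
  define x2 where "x2 = - (\<sigma> * \<tau> * v1) + \<beta> * v2"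
  have key: "(u1 * d + u2 * w) * x1 + u2 * b * x2 = 1"
  proof -
    have "(u1 * d + u2 * w) * x1 + u2 * b * x2 =
        u1 * (d * \<rho> * \<tau>) * v1 + u2 * ((w * \<rho>) * \<tau> * v1) - u2 * ((b * \<sigma>) * \<tau> * v1) + u2 * (b * \<beta>) * v2"
      unfolding x1_def x2_def by (simp add: algebra_simps)
    also have "\<dots> = u1 * m * v1 + u2 * m * v2" unfolding rs(2) tb(2)[symmetric] m_def by simp
    finally show ?thesis using uv by simp
  qed
  then obtain q t where Y: "invertible_mat (mat2 x1 q x2 t)"
    by (rule unimodular_column_extends_to_invertible[OF bez])
  show ?thesis
    using X Y key by (intro that[of "mat2 u1 u2 r s" "mat2 x1 q x2 t"]) (simp_all add: mat2_mult)
qed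

section \<open>Elementary transformations of matrices\<close>

lemma sum_two_terms:
  assumes "finite S" "i \<in> S" "j \<in> S" "i \<noteq> j" "\<And>k. k \<in> S \<Longrightarrow> k \<noteq> i \<Longrightarrow> k \<noteq> j \<Longrightarrow> f k = 0"
  shows "sum f S = f i + f j"
proof -
  have "sum f S = f i + sum f (S - {i})" using assms by (simp add: sum.remove)
  also have "sum f (S - {i}) = f j + sum f (S - {i} - {j})" using assms by (intro sum.remove) auto
  also have "sum f (S - {i} - {j}) = 0" using assms by (intro sum.neutral) auto
  finally show ?thesis by simp
qed

lemma index_mult_mat_sum:
  fixes A B :: "'a::semiring_0 mat"
  assumes "A \<in> carrier_mat m n" "B \<in> carrier_mat n p" "i < m" "j < p"
  shows "(A * B) $$ (i, j) = (\<Sum>k\<in>{0..<n}. A $$ (i, k) * B $$ (k, j))"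
  using assms by (auto simp: scalar_prod_def intro!: sum.cong)

definition embed2 :: "nat \<Rightarrow> nat \<Rightarrow> nat \<Rightarrow> 'a::ring_1 mat \<Rightarrow> 'a mat" where
  "embed2 n i j X = mat n n (\<lambda>(r, c).
     if r = i then (if c = i then X $$ (0, 0) else if c = j then X $$ (0, 1) else 0)
     else if r = j then (if c = i then X $$ (1, 0) else if c = j then X $$ (1, 1) else 0)
     else if r = c then 1 else 0)"

lemma embed2_carrier [simp]: "embed2 n i j X \<in> carrier_mat n n"
  by (simp add: embed2_def)

lemma embed2_dim [simp]: "dim_row (embed2 n i j X) = n" "dim_col (embed2 n i j X) = n"
  by (simp_all add: embed2_def)

lemma index_embed2:
  "r < n \<Longrightarrow> c < n \<Longrightarrow> embed2 n i j X $$ (r, c) =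
     (if r = i then (if c = i then X $$ (0, 0) else if c = j then X $$ (0, 1) else 0)
      else if r = j then (if c = i then X $$ (1, 0) else if c = j then X $$ (1, 1) else 0)
      else if r = c then 1 else 0)"
  by (simp add: embed2_def)

lemma index_embed2_mult:
  fixes X A :: "'a::ring_1 mat"
  assumes "i \<noteq> j" "i < n" "j < n" "A \<in> carrier_mat n m" "r < n" "c < m"
  shows "(embed2 n i j X * A) $$ (r, c) =
    (if r = i then X $$ (0, 0) * A $$ (i, c) + X $$ (0, 1) * A $$ (j, c)
     else if r = j then X $$ (1, 0) * A $$ (i, c) + X $$ (1, 1) * A $$ (j, c)
     else A $$ (r, c))"
proof -
  have "(embed2 n i j X * A) $$ (r, c) = (\<Sum>k\<in>{0..<n}. embed2 n i j X $$ (r, k) * A $$ (k, c))"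
    by (rule index_mult_mat_sum[OF embed2_carrier assms(4-6)])
  also have "\<dots> = (if r = i then X $$ (0, 0) * A $$ (i, c) + X $$ (0, 1) * A $$ (j, c)
     else if r = j then X $$ (1, 0) * A $$ (i, c) + X $$ (1, 1) * A $$ (j, c)
     else A $$ (r, c))"
  proof (cases "r = i \<or> r = j")
    case True
    then show ?thesis using assms by (subst sum_two_terms[of _ i j]) (auto simp: index_embed2)
  next
    case False
    then have "(\<Sum>k\<in>{0..<n}. embed2 n i j X $$ (r, k) * A $$ (k, c))
        = (\<Sum>k\<in>{0..<n}. if k = r then A $$ (r, c) else 0)"
      using assms by (intro sum.cong) (auto simp: index_embed2)
    then show ?thesis using False assms by simp
  qed
  finally show ?thesis .
qed

lemma index_mult_embed2:
  fixes X A :: "'a::ring_1 mat"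
  assumes "i \<noteq> j" "i < n" "j < n" "A \<in> carrier_mat m n" "r < m" "c < n"
  shows "(A * embed2 n i j X) $$ (r, c) =
    (if c = i then A $$ (r, i) * X $$ (0, 0) + A $$ (r, j) * X $$ (1, 0)
     else if c = j then A $$ (r, i) * X $$ (0, 1) + A $$ (r, j) * X $$ (1, 1)
     else A $$ (r, c))"
proof -
  have "(A * embed2 n i j X) $$ (r, c) = (\<Sum>k\<in>{0..<n}. A $$ (r, k) * embed2 n i j X $$ (k, c))"
    by (rule index_mult_mat_sum[OF assms(4) embed2_carrier assms(5,6)])
  also have "\<dots> = (if c = i then A $$ (r, i) * X $$ (0, 0) + A $$ (r, j) * X $$ (1, 0)
     else if c = j then A $$ (r, i) * X $$ (0, 1) + A $$ (r, j) * X $$ (1, 1)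
     else A $$ (r, c))"
  proof (cases "c = i \<or> c = j")
    case True
    then show ?thesis using assms by (subst sum_two_terms[of _ i j]) (auto simp: index_embed2)
  next
    case False
    then have "(\<Sum>k\<in>{0..<n}. A $$ (r, k) * embed2 n i j X $$ (k, c))
        = (\<Sum>k\<in>{0..<n}. if k = c then A $$ (r, c) else 0)"
      using assms by (intro sum.cong) (auto simp: index_embed2)
    then show ?thesis using False assms by simp
  qed
  finally show ?thesis .
qed

lemma embed2_mult:
  fixes X Y :: "'a::ring_1 mat"
  assumes "i \<noteq> j" "i < n" "j < n" "X \<in> carrier_mat 2 2" "Y \<in> carrier_mat 2 2"
  shows "embed2 n i j X * embed2 n i j Y = embed2 n i j (X * Y)"
proof (rule eq_matI)
  fix r c assume "r < dim_row (embed2 n i j (X * Y))" "c < dim_col (embed2 n i j (X * Y))"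
  then have rc: "r < n" "c < n" by auto
  show "(embed2 n i j X * embed2 n i j Y) $$ (r, c) = embed2 n i j (X * Y) $$ (r, c)"
    unfolding index_embed2_mult[OF assms(1-3) embed2_carrier rc] using rc assms
    by (auto simp: index_embed2 scalar_prod_def numeral_2_eq_2)
qed auto

lemma embed2_one: "i \<noteq> j \<Longrightarrow> embed2 n i j (1\<^sub>m 2) = (1\<^sub>m n :: 'a::ring_1 mat)"
  by (rule eq_matI) (auto simp: index_embed2)

lemma invertible_embed2:
  fixes X :: "'a::ring_1 mat"
  assumes "i \<noteq> j" "i < n" "j < n" "X \<in> carrier_mat 2 2" "invertible_mat X"
  shows "invertible_mat (embed2 n i j X)"
proof -
  obtain X' where X': "X' \<in> carrier_mat 2 2" "X * X' = 1\<^sub>m 2" "X' * X = 1\<^sub>m 2"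
    using invertible_mat_inverse[OF assms(5,4)] .
  show ?thesis
    by (rule invertible_matI[of _ n "embed2 n i j X'"])
       (auto simp: embed2_mult[OF assms(1-3)] assms X' embed2_one[OF assms(1)])
qed

lemma embed2_corner:
  fixes A X Y :: "'a::ring_1 mat"
  assumes A: "A \<in> carrier_mat m n" and X: "X \<in> carrier_mat 2 2" and Y: "Y \<in> carrier_mat 2 2"
    and ij: "0 < i" "i < m" "0 < j" "j < n"
  shows "(embed2 m 0 i X * A * embed2 n 0 j Y) $$ (0, 0) =
    (X * mat2 (A $$ (0, 0)) (A $$ (0, j)) (A $$ (i, 0)) (A $$ (i, j)) * Y) $$ (0, 0)"
proof -
  obtain x11 x12 x21 x22 where x: "X = mat2 x11 x12 x21 x22" using carrier_mat2_cases[OF X] .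
  obtain y11 y12 y21 y22 where y: "Y = mat2 y11 y12 y21 y22" using carrier_mat2_cases[OF Y] .
  have XA: "embed2 m 0 i X * A \<in> carrier_mat m n" using mult_carrier_mat[OF embed2_carrier A] .
  have "(embed2 m 0 i X * A * embed2 n 0 j Y) $$ (0, 0) =
      (embed2 m 0 i X * A) $$ (0, 0) * y11 + (embed2 m 0 i X * A) $$ (0, j) * y21"
    using ij by (subst index_mult_embed2[OF _ _ _ XA]) (auto simp: y)
  also have "\<dots> = (x11 * A $$ (0, 0) + x12 * A $$ (i, 0)) * y11 + (x11 * A $$ (0, j) + x12 * A $$ (i, j)) * y21"
    using ij by (simp add: index_embed2_mult[OF _ _ _ A] x)
  finally show ?thesis by (simp add: x y mat2_mult algebra_simps)
qed

definition equivalent_mat :: "nat \<Rightarrow> nat \<Rightarrow> 'a::ring_1 mat \<Rightarrow> 'a mat \<Rightarrow> bool" where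
  "equivalent_mat m n A B \<longleftrightarrow> A \<in> carrier_mat m n \<and>
     (\<exists>P Q. P \<in> carrier_mat m m \<and> Q \<in> carrier_mat n n \<and> invertible_mat P \<and> invertible_mat Q \<and>
       B = P * A * Q)"

lemma equivalent_mat_carrier: "equivalent_mat m n A B \<Longrightarrow> B \<in> carrier_mat m n"
  unfolding equivalent_mat_def by auto

lemma equivalent_mat_refl: "A \<in> carrier_mat m n \<Longrightarrow> equivalent_mat m n A (A :: 'a::ring_1 mat)"
  unfolding equivalent_mat_def
  by (intro conjI exI[of _ "1\<^sub>m m"] exI[of _ "1\<^sub>m n"]) (auto simp: invertible_one_mat)

lemma mult_mat_assoc4:
  fixes P' P A Q Q' :: "'a::ring_1 mat"
  assumes "P' \<in> carrier_mat m m" "P \<in> carrier_mat m m" "A \<in> carrier_mat m n"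
    "Q \<in> carrier_mat n n" "Q' \<in> carrier_mat n n"
  shows "P' * (P * A * Q) * Q' = (P' * P) * A * (Q * Q')"
proof -
  have PA: "P * A \<in> carrier_mat m n" and PPA: "P' * (P * A) \<in> carrier_mat m n" using assms by auto
  have "P' * (P * A * Q) * Q' = (P' * (P * A)) * Q * Q'"
    using assoc_mult_mat[OF assms(1) PA assms(4)] by simp
  also have "\<dots> = (P' * (P * A)) * (Q * Q')" using assoc_mult_mat[OF PPA assms(4,5)] .
  also have "P' * (P * A) = (P' * P) * A" using assoc_mult_mat[OF assms(1-3)] by simp
  finally show ?thesis .
qed

lemma equivalent_mat_trans:
  assumes "equivalent_mat m n A B" "equivalent_mat m n B (C :: 'a::ring_1 mat)"
  shows "equivalent_mat m n A C"
proof -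
  obtain P Q where PQ: "P \<in> carrier_mat m m" "Q \<in> carrier_mat n n" "invertible_mat P" "invertible_mat Q"
    "B = P * A * Q" and A: "A \<in> carrier_mat m n"
    using assms(1) unfolding equivalent_mat_def by blast
  obtain P' Q' where PQ': "P' \<in> carrier_mat m m" "Q' \<in> carrier_mat n n" "invertible_mat P'"
    "invertible_mat Q'" "C = P' * B * Q'"
    using assms(2) unfolding equivalent_mat_def by blast
  have "C = (P' * P) * A * (Q * Q')"
    unfolding PQ'(5) PQ(5) by (rule mult_mat_assoc4[OF PQ'(1) PQ(1) A PQ(2) PQ'(2)])
  moreover have "invertible_mat (P' * P)" "invertible_mat (Q * Q')"
    using invertible_mult_mat[OF PQ'(3) PQ(3) PQ'(1) PQ(1)] invertible_mult_mat[OF PQ(4) PQ'(4) PQ(2) PQ'(2)] .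
  moreover have "P' * P \<in> carrier_mat m m" "Q * Q' \<in> carrier_mat n n" using PQ PQ' by auto
  ultimately show ?thesis unfolding equivalent_mat_def using A by blast
qed

lemma equivalent_mat_mult_left:
  assumes "A \<in> carrier_mat m n" "P \<in> carrier_mat m m" "invertible_mat (P :: 'a::ring_1 mat)"
  shows "equivalent_mat m n A (P * A)"
  unfolding equivalent_mat_def using assms
  by (intro conjI exI[of _ P] exI[of _ "1\<^sub>m n"]) (auto simp: invertible_one_mat)

lemma equivalent_mat_mult_right:
  assumes "A \<in> carrier_mat m n" "Q \<in> carrier_mat n n" "invertible_mat (Q :: 'a::ring_1 mat)"
  shows "equivalent_mat m n A (A * Q)"
  unfolding equivalent_mat_def using assms
  by (intro conjI exI[of _ "1\<^sub>m m"] exI[of _ Q]) (auto simp: invertible_one_mat)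

lemma clear_first_row:
  fixes A :: "'a::ring_1 mat"
  assumes A: "A \<in> carrier_mat m n" and m0: "0 < m" and inv: "I A"
    and step: "\<And>B t. B \<in> carrier_mat m n \<Longrightarrow> I B \<Longrightarrow> 0 < t \<Longrightarrow> t < n \<Longrightarrow>
      \<exists>X. X \<in> carrier_mat 2 2 \<and> invertible_mat X \<and>
        B $$ (0, 0) * X $$ (0, 1) + B $$ (0, t) * X $$ (1, 1) = 0 \<and> I (B * embed2 n 0 t X)"
  obtains Q where "Q \<in> carrier_mat n n" "invertible_mat Q" "I (A * Q)"
    "\<forall>j. 0 < j \<and> j < n \<longrightarrow> (A * Q) $$ (0, j) = 0"
proof -
  have "\<exists>Q. Q \<in> carrier_mat n n \<and> invertible_mat Q \<and> I (A * Q) \<and>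
      (\<forall>j. 0 < j \<and> j < t \<longrightarrow> (A * Q) $$ (0, j) = 0)" if "t \<le> n" for t
    using that
  proof (induction t)
    case 0
    show ?case using A inv invertible_one_mat by (intro exI[of _ "1\<^sub>m n"]) auto
  next
    case (Suc t)
    then obtain Q where Q: "Q \<in> carrier_mat n n" "invertible_mat Q" "I (A * Q)"
      "\<forall>j. 0 < j \<and> j < t \<longrightarrow> (A * Q) $$ (0, j) = 0" by auto
    show ?case
    proof (cases "t = 0")
      case True
      then show ?thesis using Q by auto
    next
      case False
      define B where "B = A * Q"
      have B: "B \<in> carrier_mat m n" using A Q(1) unfolding B_def by simp
      obtain X where X: "X \<in> carrier_mat 2 2" "invertible_mat X"
        "B $$ (0, 0) * X $$ (0, 1) + B $$ (0, t) * X $$ (1, 1) = 0" "I (B * embed2 n 0 t X)"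
        using step[OF B _ _ _, of t] Q(3) False Suc.prems unfolding B_def[symmetric] by auto
      let ?E = "embed2 n 0 t X"
      have "A * (Q * ?E) = B * ?E"
        unfolding B_def by (rule assoc_mult_mat[symmetric, OF A Q(1) embed2_carrier])
      moreover have "invertible_mat (Q * ?E)"
        using invertible_mult_mat[OF Q(2) invertible_embed2 Q(1) embed2_carrier] X(1,2) False Suc.prems
        by auto
      moreover have "(B * ?E) $$ (0, j) = 0" if "0 < j" "j < Suc t" for j
        using that False Suc.prems X(3) Q(4)
        by (subst index_mult_embed2[OF _ _ _ B m0]) (auto simp: B_def less_Suc_eq)
      ultimately show ?thesis using Q(1) X(4) by (intro exI[of _ "Q * ?E"]) auto
    qed
  qed
  then show ?thesis using that by blast
qed

lemma clear_first_column:
  fixes A :: "'a::ring_1 mat"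
  assumes A: "A \<in> carrier_mat m n" and n0: "0 < n" and inv: "I A"
    and step: "\<And>B t. B \<in> carrier_mat m n \<Longrightarrow> I B \<Longrightarrow> 0 < t \<Longrightarrow> t < m \<Longrightarrow>
      \<exists>X. X \<in> carrier_mat 2 2 \<and> invertible_mat X \<and>
        X $$ (1, 0) * B $$ (0, 0) + X $$ (1, 1) * B $$ (t, 0) = 0 \<and> I (embed2 m 0 t X * B)"
  obtains P where "P \<in> carrier_mat m m" "invertible_mat P" "I (P * A)"
    "\<forall>i. 0 < i \<and> i < m \<longrightarrow> (P * A) $$ (i, 0) = 0"
proof -
  have "\<exists>P. P \<in> carrier_mat m m \<and> invertible_mat P \<and> I (P * A) \<and>
      (\<forall>i. 0 < i \<and> i < t \<longrightarrow> (P * A) $$ (i, 0) = 0)" if "t \<le> m" for t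
    using that
  proof (induction t)
    case 0
    show ?case using A inv invertible_one_mat by (intro exI[of _ "1\<^sub>m m"]) auto
  next
    case (Suc t)
    then obtain P where P: "P \<in> carrier_mat m m" "invertible_mat P" "I (P * A)"
      "\<forall>i. 0 < i \<and> i < t \<longrightarrow> (P * A) $$ (i, 0) = 0" by auto
    show ?case
    proof (cases "t = 0")
      case True
      then show ?thesis using P by auto
    next
      case False
      define B where "B = P * A"
      have B: "B \<in> carrier_mat m n" using A P(1) unfolding B_def by simp
      obtain X where X: "X \<in> carrier_mat 2 2" "invertible_mat X"
        "X $$ (1, 0) * B $$ (0, 0) + X $$ (1, 1) * B $$ (t, 0) = 0" "I (embed2 m 0 t X * B)"
        using step[OF B _ _ _, of t] P(3) False Suc.prems unfolding B_def[symmetric] by auto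
      let ?E = "embed2 m 0 t X"
      have "(?E * P) * A = ?E * B"
        unfolding B_def by (rule assoc_mult_mat[OF embed2_carrier P(1) A])
      moreover have "invertible_mat (?E * P)"
        using invertible_mult_mat[OF invertible_embed2 P(2) embed2_carrier P(1)] X(1,2) False Suc.prems
        by auto
      moreover have "(?E * B) $$ (i, 0) = 0" if "0 < i" "i < Suc t" for i
        using that False Suc.prems X(3) P(4)
        by (subst index_embed2_mult[OF _ _ _ B _ n0]) (auto simp: B_def less_Suc_eq)
      ultimately show ?thesis using P(1) X(4) by (intro exI[of _ "?E * P"]) auto
    qed
  qed
  then show ?thesis using that by blast
qed

lemma bezout_clear_first_row:
  fixes A :: "'a::ring_1 mat"
  assumes bez: "bezout_domain TYPE('a)" and A: "A \<in> carrier_mat m n" and "0 < m"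
  obtains Q where "Q \<in> carrier_mat n n" "invertible_mat Q" "\<forall>j. 0 < j \<and> j < n \<longrightarrow> (A * Q) $$ (0, j) = 0"
proof -
  have step: "\<exists>X. X \<in> carrier_mat 2 2 \<and> invertible_mat X \<and>
      B $$ (0, 0) * X $$ (0, 1) + B $$ (0, t) * X $$ (1, 1) = 0 \<and> True"
    for B :: "'a mat" and t
  proof -
    obtain x s y u where "invertible_mat (mat2 x s y u)" "B $$ (0, 0) * s + B $$ (0, t) * u = 0"
      by (rule bezout_right_reduction[OF bez])
    then show ?thesis by (intro exI[of _ "mat2 x s y u"]) simp
  qed
  obtain Q where "Q \<in> carrier_mat n n" "invertible_mat Q" "\<forall>j. 0 < j \<and> j < n \<longrightarrow> (A * Q) $$ (0, j) = 0"
    by (rule clear_first_row[OF A \<open>0 < m\<close> TrueI step])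
  then show ?thesis by (rule that)
qed

lemma bezout_clear_first_column:
  fixes A :: "'a::ring_1 mat"
  assumes bez: "bezout_domain TYPE('a)" and A: "A \<in> carrier_mat m n" and "0 < n"
  obtains P where "P \<in> carrier_mat m m" "invertible_mat P" "\<forall>i. 0 < i \<and> i < m \<longrightarrow> (P * A) $$ (i, 0) = 0"
proof -
  have step: "\<exists>X. X \<in> carrier_mat 2 2 \<and> invertible_mat X \<and>
      X $$ (1, 0) * B $$ (0, 0) + X $$ (1, 1) * B $$ (t, 0) = 0 \<and> True"
    for B :: "'a mat" and t
  proof -
    obtain x y s u where "invertible_mat (mat2 x y s u)" "s * B $$ (0, 0) + u * B $$ (t, 0) = 0"
      by (rule bezout_left_reduction[OF bez])
    then show ?thesis by (intro exI[of _ "mat2 x y s u"]) simp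
  qed
  obtain P where "P \<in> carrier_mat m m" "invertible_mat P" "\<forall>i. 0 < i \<and> i < m \<longrightarrow> (P * A) $$ (i, 0) = 0"
    by (rule clear_first_column[OF A \<open>0 < n\<close> TrueI step])
  then show ?thesis by (rule that)
qed

lemma unit_pivot_clear_first_row:
  fixes A :: "'a::ring_1 mat"
  assumes A: "A \<in> carrier_mat m n" and "0 < m" and "0 < n" and pivot: "A $$ (0, 0) = 1"
  obtains Q where "Q \<in> carrier_mat n n" "invertible_mat Q" "\<forall>i<m. (A * Q) $$ (i, 0) = A $$ (i, 0)"
    "\<forall>j. 0 < j \<and> j < n \<longrightarrow> (A * Q) $$ (0, j) = 0"
proof -
  let ?I = "\<lambda>B. \<forall>i<m. B $$ (i, 0) = A $$ (i, 0)"
  have step: "\<exists>X. X \<in> carrier_mat 2 2 \<and> invertible_mat X \<and>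
      B $$ (0, 0) * X $$ (0, 1) + B $$ (0, t) * X $$ (1, 1) = 0 \<and> ?I (B * embed2 n 0 t X)"
    if B: "B \<in> carrier_mat m n" "?I B" and t: "0 < t" "t < n" for B t
  proof (intro exI[of _ "mat2 1 (- B $$ (0, t)) 0 1"] conjI)
    show "invertible_mat (mat2 1 (- B $$ (0, t)) 0 1)"
      by (rule invertible_mat2I[of _ _ _ _ 1 "B $$ (0, t)" 0 1]) (simp_all add: mat2_mult_eq_one_mat_iff)
    show "?I (B * embed2 n 0 t (mat2 1 (- B $$ (0, t)) 0 1))"
    proof (intro allI impI)
      fix i assume "i < m"
      then show "(B * embed2 n 0 t (mat2 1 (- B $$ (0, t)) 0 1)) $$ (i, 0) = A $$ (i, 0)"
        using B t by (subst index_mult_embed2[OF _ _ _ B(1) \<open>i < m\<close> \<open>0 < n\<close>]) auto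
    qed
  qed (use B \<open>0 < m\<close> pivot in auto)
  obtain Q where "Q \<in> carrier_mat n n" "invertible_mat Q" "?I (A * Q)"
    "\<forall>j. 0 < j \<and> j < n \<longrightarrow> (A * Q) $$ (0, j) = 0"
    by (rule clear_first_row[of A m n ?I, OF A \<open>0 < m\<close> _ step]) simp
  then show ?thesis by (rule that)
qed

lemma unit_pivot_clear_first_column:
  fixes A :: "'a::ring_1 mat"
  assumes A: "A \<in> carrier_mat m n" and "0 < m" and "0 < n" and pivot: "A $$ (0, 0) = 1"
  obtains P where "P \<in> carrier_mat m m" "invertible_mat P" "\<forall>j<n. (P * A) $$ (0, j) = A $$ (0, j)"
    "\<forall>i. 0 < i \<and> i < m \<longrightarrow> (P * A) $$ (i, 0) = 0"
proof -
  let ?I = "\<lambda>B. \<forall>j<n. B $$ (0, j) = A $$ (0, j)"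
  have step: "\<exists>X. X \<in> carrier_mat 2 2 \<and> invertible_mat X \<and>
      X $$ (1, 0) * B $$ (0, 0) + X $$ (1, 1) * B $$ (t, 0) = 0 \<and> ?I (embed2 m 0 t X * B)"
    if B: "B \<in> carrier_mat m n" "?I B" and t: "0 < t" "t < m" for B t
  proof (intro exI[of _ "mat2 1 0 (- B $$ (t, 0)) 1"] conjI)
    show "invertible_mat (mat2 1 0 (- B $$ (t, 0)) 1)"
      by (rule invertible_mat2I[of _ _ _ _ 1 0 "B $$ (t, 0)" 1]) (simp_all add: mat2_mult_eq_one_mat_iff)
    show "?I (embed2 m 0 t (mat2 1 0 (- B $$ (t, 0)) 1) * B)"
    proof (intro allI impI)
      fix j assume "j < n"
      then show "(embed2 m 0 t (mat2 1 0 (- B $$ (t, 0)) 1) * B) $$ (0, j) = A $$ (0, j)"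
        using B t by (subst index_embed2_mult[OF _ _ _ B(1) \<open>0 < m\<close> \<open>j < n\<close>]) auto
    qed
  qed (use B \<open>0 < n\<close> pivot in auto)
  obtain P where "P \<in> carrier_mat m m" "invertible_mat P" "?I (P * A)"
    "\<forall>i. 0 < i \<and> i < m \<longrightarrow> (P * A) $$ (i, 0) = 0"
    by (rule clear_first_column[of A m n ?I, OF A \<open>0 < n\<close> _ step]) simp
  then show ?thesis by (rule that)
qed

section \<open>Reduction to diagonal form\<close>

definition one_block :: "'a::ring_1 mat \<Rightarrow> 'a mat" where
  "one_block X = mat (Suc (dim_row X)) (Suc (dim_col X))
     (\<lambda>(r, c). if r = 0 \<and> c = 0 then 1 else if r = 0 \<or> c = 0 then 0 else X $$ (r - 1, c - 1))"

lemma one_block_carrier: "X \<in> carrier_mat m n \<Longrightarrow> one_block X \<in> carrier_mat (Suc m) (Suc n)"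
  by (auto simp: one_block_def)

lemma index_one_block:
  "r < Suc (dim_row X) \<Longrightarrow> c < Suc (dim_col X) \<Longrightarrow>
   one_block X $$ (r, c) = (if r = 0 \<and> c = 0 then 1 else if r = 0 \<or> c = 0 then 0 else X $$ (r - 1, c - 1))"
  by (simp add: one_block_def)

lemma one_block_mult:
  fixes X Y :: "'a::ring_1 mat"
  assumes X: "X \<in> carrier_mat a b" and Y: "Y \<in> carrier_mat b c"
  shows "one_block X * one_block Y = one_block (X * Y)"
proof (rule eq_matI)
  fix r s assume "r < dim_row (one_block (X * Y))" "s < dim_col (one_block (X * Y))"
  then have rs: "r < Suc a" "s < Suc c" using X Y by (auto simp: one_block_def)
  have "(one_block X * one_block Y) $$ (r, s) =
      (\<Sum>k\<in>{0..<Suc b}. one_block X $$ (r, k) * one_block Y $$ (k, s))"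
    by (rule index_mult_mat_sum[OF one_block_carrier[OF X] one_block_carrier[OF Y] rs])
  also have "\<dots> = one_block X $$ (r, 0) * one_block Y $$ (0, s)
      + (\<Sum>k\<in>{0..<b}. one_block X $$ (r, Suc k) * one_block Y $$ (Suc k, s))"
    by (simp add: sum.atLeast0_lessThan_Suc_shift del: sum.op_ivl_Suc)
  also have "\<dots> = one_block (X * Y) $$ (r, s)"
  proof (cases "r = 0 \<or> s = 0")
    case True
    then have "(\<Sum>k\<in>{0..<b}. one_block X $$ (r, Suc k) * one_block Y $$ (Suc k, s)) = 0"
      using X Y by (intro sum.neutral) (auto simp: index_one_block)
    then show ?thesis using True rs X Y by (auto simp: index_one_block)
  next
    case False
    then obtain r' s' where rs': "r = Suc r'" "s = Suc s'" by (auto simp: gr0_conv_Suc)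
    have "(\<Sum>k\<in>{0..<b}. one_block X $$ (r, Suc k) * one_block Y $$ (Suc k, s))
        = (\<Sum>k\<in>{0..<b}. X $$ (r', k) * Y $$ (k, s'))"
      using rs rs' X Y by (intro sum.cong) (auto simp: index_one_block)
    also have "\<dots> = (X * Y) $$ (r', s')"
      using rs rs' by (intro index_mult_mat_sum[symmetric, OF X Y]) auto
    finally show ?thesis using rs rs' X Y by (auto simp: index_one_block)
  qed
  finally show "(one_block X * one_block Y) $$ (r, s) = one_block (X * Y) $$ (r, s)" .
qed (use X Y in \<open>auto simp: one_block_def\<close>)

lemma one_block_one: "one_block (1\<^sub>m n :: 'a::ring_1 mat) = 1\<^sub>m (Suc n)"
  by (rule eq_matI) (auto simp: one_block_def)

lemma invertible_one_block:
  fixes X :: "'a::ring_1 mat"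
  assumes "invertible_mat X" "X \<in> carrier_mat n n"
  shows "invertible_mat (one_block X)"
proof -
  obtain X' where X': "X' \<in> carrier_mat n n" "X * X' = 1\<^sub>m n" "X' * X = 1\<^sub>m n"
    using invertible_mat_inverse[OF assms] .
  show ?thesis
    by (rule invertible_matI[of _ "Suc n" "one_block X'"])
      (auto simp: one_block_mult[OF assms(2) X'(1)] one_block_mult[OF X'(1) assms(2)] X'
        one_block_one one_block_carrier assms(2))
qed

lemma equivalent_mat_one_block:
  assumes "equivalent_mat m n C (D :: 'a::ring_1 mat)"
  shows "equivalent_mat (Suc m) (Suc n) (one_block C) (one_block D)"
proof -
  obtain P Q where PQ: "P \<in> carrier_mat m m" "Q \<in> carrier_mat n n" "invertible_mat P" "invertible_mat Q"
    "D = P * C * Q" and C: "C \<in> carrier_mat m n"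
    using assms unfolding equivalent_mat_def by blast
  have "one_block D = one_block P * one_block C * one_block Q"
    unfolding PQ(5) one_block_mult[OF mult_carrier_mat[OF PQ(1) C] PQ(2)] one_block_mult[OF PQ(1) C] ..
  then show ?thesis
    unfolding equivalent_mat_def
    using PQ C invertible_one_block[OF PQ(3,1)] invertible_one_block[OF PQ(4,2)]
    by (blast intro: one_block_carrier)
qed

lemma first_row_column_cleared_eq_one_block:
  fixes B :: "'a::ring_1 mat"
  assumes B: "B \<in> carrier_mat (Suc m) (Suc n)" and "B $$ (0, 0) = 1"
    and "\<forall>i. 0 < i \<and> i < Suc m \<longrightarrow> B $$ (i, 0) = 0" "\<forall>j. 0 < j \<and> j < Suc n \<longrightarrow> B $$ (0, j) = 0"
  shows "B = one_block (mat m n (\<lambda>(i, j). B $$ (Suc i, Suc j)))"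
  by (rule eq_matI) (use assms in \<open>auto simp: one_block_def gr0_conv_Suc\<close>)

lemma unit_pivot_equivalent_one_block:
  fixes A :: "'a::ring_1 mat"
  assumes A: "A \<in> carrier_mat (Suc m) (Suc n)" and pivot: "A $$ (0, 0) = 1"
  obtains C where "C \<in> carrier_mat m n" "equivalent_mat (Suc m) (Suc n) A (one_block C)"
proof -
  obtain P where P: "P \<in> carrier_mat (Suc m) (Suc m)" "invertible_mat P"
    "\<forall>j<Suc n. (P * A) $$ (0, j) = A $$ (0, j)" "\<forall>i. 0 < i \<and> i < Suc m \<longrightarrow> (P * A) $$ (i, 0) = 0"
    using unit_pivot_clear_first_column[OF A _ _ pivot] by blast
  define B where "B = P * A"
  have B: "B \<in> carrier_mat (Suc m) (Suc n)" using P(1) A unfolding B_def by simp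
  have pivotB: "B $$ (0, 0) = 1" using P(3) pivot unfolding B_def by auto
  obtain Q where Q: "Q \<in> carrier_mat (Suc n) (Suc n)" "invertible_mat Q"
    "\<forall>i<Suc m. (B * Q) $$ (i, 0) = B $$ (i, 0)" "\<forall>j. 0 < j \<and> j < Suc n \<longrightarrow> (B * Q) $$ (0, j) = 0"
    using unit_pivot_clear_first_row[OF B _ _ pivotB] by blast
  have BQ: "B * Q \<in> carrier_mat (Suc m) (Suc n)" using B Q(1) by simp
  have "B * Q = one_block (mat m n (\<lambda>(i, j). (B * Q) $$ (Suc i, Suc j)))"
    using Q(3,4) P(4) pivotB unfolding B_def
    by (intro first_row_column_cleared_eq_one_block[OF BQ[unfolded B_def]]) auto
  moreover have "equivalent_mat (Suc m) (Suc n) A (B * Q)"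
    unfolding B_def
    by (rule equivalent_mat_trans[OF equivalent_mat_mult_left[OF A P(1,2)]
          equivalent_mat_mult_right[OF B[unfolded B_def] Q(1,2)]])
  ultimately show ?thesis using that[of "mat m n (\<lambda>(i, j). (B * Q) $$ (Suc i, Suc j))"] by auto
qed

lemma index_mult_mat_zero_row:
  fixes A B :: "'a::semiring_0 mat"
  assumes "A \<in> carrier_mat m n" "B \<in> carrier_mat n p" "r < m" "j < p" "\<forall>k<n. A $$ (r, k) = 0"
  shows "(A * B) $$ (r, j) = 0"
  using assms by (simp add: index_mult_mat_sum[OF assms(1-4)])

lemma index_mult_mat_zero_col:
  fixes A B :: "'a::semiring_0 mat"
  assumes "A \<in> carrier_mat m n" "B \<in> carrier_mat n p" "r < m" "j < p" "\<forall>k<n. B $$ (k, j) = 0"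
  shows "(A * B) $$ (r, j) = 0"
  using assms by (simp add: index_mult_mat_sum[OF assms(1-4)])

lemma bezout_first_row_pivot:
  fixes A :: "'a::ring_1 mat"
  assumes bez: "bezout_domain TYPE('a)" and A: "A \<in> carrier_mat m n"
    and ij: "i0 < m" "j0 < n" "A $$ (i0, j0) \<noteq> 0"
  obtains B where "equivalent_mat m n A B" "B $$ (0, 0) \<noteq> 0" "\<forall>j. 0 < j \<and> j < n \<longrightarrow> B $$ (0, j) = 0"
proof -
  have m0: "0 < m" using ij by simp
  obtain A1 where A1: "equivalent_mat m n A A1" "A1 $$ (0, j0) \<noteq> 0"
  proof (cases "i0 = 0")
    case True
    then show ?thesis using that[of A] equivalent_mat_refl[OF A] ij by auto
  next
    case False
    let ?E = "embed2 m 0 i0 (mat2 0 1 1 (0::'a))"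
    have "invertible_mat (mat2 0 1 1 (0::'a))"
      by (rule invertible_mat2I[of _ _ _ _ 0 1 1 0]) (simp_all add: mat2_mult_eq_one_mat_iff)
    then have "invertible_mat ?E" using False ij by (intro invertible_embed2) auto
    moreover have "(?E * A) $$ (0, j0) = A $$ (i0, j0)"
      using False ij by (subst index_embed2_mult[OF _ _ _ A m0]) auto
    ultimately show ?thesis using that[of "?E * A"] equivalent_mat_mult_left[OF A embed2_carrier] ij by auto
  qed
  have A1c: "A1 \<in> carrier_mat m n" using equivalent_mat_carrier[OF A1(1)] .
  obtain Q where Q: "Q \<in> carrier_mat n n" "invertible_mat Q" "\<forall>j. 0 < j \<and> j < n \<longrightarrow> (A1 * Q) $$ (0, j) = 0"
    by (rule bezout_clear_first_row[OF bez A1c m0])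
  have "(A1 * Q) $$ (0, 0) \<noteq> 0"
  proof
    assume "(A1 * Q) $$ (0, 0) = 0"
    then have row: "\<forall>k<n. (A1 * Q) $$ (0, k) = 0" using Q(3) by (metis gr0I)
    obtain Q' where Q': "Q' \<in> carrier_mat n n" "Q * Q' = 1\<^sub>m n"
      using invertible_mat_inverse[OF Q(2,1)] by blast
    have "A1 * Q * Q' = A1" using A1c Q(1) Q' by (simp add: assoc_mult_mat[OF A1c Q(1) Q'(1)])
    moreover have "(A1 * Q * Q') $$ (0, j0) = 0"
      using A1c Q(1) Q'(1) m0 ij(2) row by (intro index_mult_mat_zero_row[of _ m n]) auto
    ultimately show False using A1(2) by simp
  qed
  then show ?thesis
    using that equivalent_mat_trans[OF A1(1) equivalent_mat_mult_right[OF A1c Q(1,2)]] Q(3) by blast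
qed

lemma two_simple_unit_pivot:
  fixes A :: "'a::ring_1 mat"
  assumes bez: "bezout_domain TYPE('a)" and ts: "two_simple TYPE('a)" and A: "A \<in> carrier_mat m n"
    and pivot: "A $$ (0, 0) \<noteq> 0" and row: "\<forall>j. 0 < j \<and> j < n \<longrightarrow> A $$ (0, j) = 0"
    and ij: "0 < i" "i < m" "0 < j" "j < n" "A $$ (i, j) \<noteq> 0"
  obtains B where "equivalent_mat m n A B" "B $$ (0, 0) = 1"
proof -
  obtain X Y where XY: "X \<in> carrier_mat 2 2" "Y \<in> carrier_mat 2 2" "invertible_mat X" "invertible_mat Y"
    "(X * mat2 (A $$ (0, 0)) 0 (A $$ (i, 0)) (A $$ (i, j)) * Y) $$ (0, 0) = 1"
    by (rule two_simple_lower_triangular_corner_one[OF bez ts pivot ij(5)])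
  let ?EX = "embed2 m 0 i X" and ?EY = "embed2 n 0 j Y"
  have "invertible_mat ?EX" "invertible_mat ?EY"
    using invertible_embed2[OF _ _ _ XY(1,3)] invertible_embed2[OF _ _ _ XY(2,4)] ij by auto
  then have "equivalent_mat m n A (?EX * A * ?EY)"
    using equivalent_mat_trans[OF equivalent_mat_mult_left[OF A embed2_carrier]
        equivalent_mat_mult_right[OF mult_carrier_mat[OF embed2_carrier A] embed2_carrier]]
    by blast
  moreover have "(?EX * A * ?EY) $$ (0, 0) = 1"
    using embed2_corner[OF A XY(1,2) ij(1-4)] row ij XY(5) by simp
  ultimately show ?thesis by (rule that)
qed

definition unit_diag_mat :: "nat \<Rightarrow> nat \<Rightarrow> nat \<Rightarrow> 'a::ring_1 \<Rightarrow> 'a mat" where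
  "unit_diag_mat m n k e = mat m n (\<lambda>(i, j). if i = j \<and> i < k then (if i + 1 < k then 1 else e) else 0)"

lemma one_block_unit_diag_mat:
  "one_block (unit_diag_mat m n k e) = unit_diag_mat (Suc m) (Suc n) (Suc k) (if k = 0 then 1 else e)"
  by (rule eq_matI) (auto simp: one_block_def unit_diag_mat_def)

lemma bezout_first_column_corner:
  fixes A :: "'a::ring_1 mat"
  assumes bez: "bezout_domain TYPE('a)" and A: "A \<in> carrier_mat m n" and "0 < n"
    and rest: "\<forall>i j. i < m \<and> 0 < j \<and> j < n \<longrightarrow> A $$ (i, j) = 0"
  obtains e where "equivalent_mat m n A (unit_diag_mat m n 1 e)"
proof -
  obtain P where P: "P \<in> carrier_mat m m" "invertible_mat P" "\<forall>i. 0 < i \<and> i < m \<longrightarrow> (P * A) $$ (i, 0) = 0"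
    by (rule bezout_clear_first_column[OF bez A \<open>0 < n\<close>])
  have "P * A = unit_diag_mat m n 1 ((P * A) $$ (0, 0))"
  proof (rule eq_matI)
    fix i j assume "i < dim_row (unit_diag_mat m n 1 ((P * A) $$ (0, 0)))"
      "j < dim_col (unit_diag_mat m n 1 ((P * A) $$ (0, 0)))"
    then have ij: "i < m" "j < n" by (auto simp: unit_diag_mat_def)
    show "(P * A) $$ (i, j) = unit_diag_mat m n 1 ((P * A) $$ (0, 0)) $$ (i, j)"
    proof (cases "j = 0")
      case True
      then show ?thesis using P(3) ij by (cases "i = 0") (auto simp: unit_diag_mat_def)
    next
      case False
      then have "(P * A) $$ (i, j) = 0"
        using rest ij by (intro index_mult_mat_zero_col[OF P(1) A]) auto
      then show ?thesis using False ij by (auto simp: unit_diag_mat_def)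
    qed
  qed (use P(1) A in \<open>auto simp: unit_diag_mat_def\<close>)
  then show ?thesis using that equivalent_mat_mult_left[OF A P(1,2)] by metis
qed

lemma bezout_two_simple_reduction:
  fixes A :: "'a::ring_1 mat"
  assumes bez: "bezout_domain TYPE('a)" and ts: "two_simple TYPE('a)"
    and A: "A \<in> carrier_mat (Suc m) (Suc n)"
  shows "(\<exists>C. C \<in> carrier_mat m n \<and> equivalent_mat (Suc m) (Suc n) A (one_block C))
    \<or> (\<exists>e. equivalent_mat (Suc m) (Suc n) A (unit_diag_mat (Suc m) (Suc n) 1 e))"
proof (cases "\<exists>i j. i < Suc m \<and> j < Suc n \<and> A $$ (i, j) \<noteq> 0")
  case False
  then have "\<forall>i j. i < Suc m \<and> 0 < j \<and> j < Suc n \<longrightarrow> A $$ (i, j) = 0" by blast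
  then obtain e where "equivalent_mat (Suc m) (Suc n) A (unit_diag_mat (Suc m) (Suc n) 1 e)"
    by (rule bezout_first_column_corner[OF bez A zero_less_Suc])
  then show ?thesis by blast
next
  case True
  then obtain i0 j0 where ij0: "i0 < Suc m" "j0 < Suc n" "A $$ (i0, j0) \<noteq> 0" by blast
  obtain B where B: "equivalent_mat (Suc m) (Suc n) A B" "B $$ (0, 0) \<noteq> 0"
    "\<forall>j. 0 < j \<and> j < Suc n \<longrightarrow> B $$ (0, j) = 0"
    by (rule bezout_first_row_pivot[OF bez A ij0])
  have Bc: "B \<in> carrier_mat (Suc m) (Suc n)" using equivalent_mat_carrier[OF B(1)] .
  show ?thesis
  proof (cases "\<exists>i j. 0 < i \<and> i < Suc m \<and> 0 < j \<and> j < Suc n \<and> B $$ (i, j) \<noteq> 0")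
    case True
    then obtain i j where "0 < i" "i < Suc m" "0 < j" "j < Suc n" "B $$ (i, j) \<noteq> 0" by blast
    then obtain B' where B': "equivalent_mat (Suc m) (Suc n) B B'" "B' $$ (0, 0) = 1"
      by (rule two_simple_unit_pivot[OF bez ts Bc B(2,3)])
    obtain C where C: "C \<in> carrier_mat m n" "equivalent_mat (Suc m) (Suc n) B' (one_block C)"
      by (rule unit_pivot_equivalent_one_block[OF equivalent_mat_carrier[OF B'(1)] B'(2)])
    have "equivalent_mat (Suc m) (Suc n) A (one_block C)"
      using equivalent_mat_trans[OF B(1) equivalent_mat_trans[OF B'(1) C(2)]] .
    then show ?thesis using C(1) by blast
  next
    case False
    then have "\<forall>i j. i < Suc m \<and> 0 < j \<and> j < Suc n \<longrightarrow> B $$ (i, j) = 0"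
      using B(3) by (metis gr0I)
    then obtain e where "equivalent_mat (Suc m) (Suc n) B (unit_diag_mat (Suc m) (Suc n) 1 e)"
      by (rule bezout_first_column_corner[OF bez Bc zero_less_Suc])
    then show ?thesis using equivalent_mat_trans[OF B(1)] by blast
  qed
qed

lemma bezout_two_simple_equivalent_unit_diag_mat:
  fixes A :: "'a::ring_1 mat"
  assumes bez: "bezout_domain TYPE('a)" and ts: "two_simple TYPE('a)"
  shows "A \<in> carrier_mat m n \<Longrightarrow> \<exists>k e. k \<le> min m n \<and> equivalent_mat m n A (unit_diag_mat m n k e)"
proof (induction m arbitrary: n A)
  case 0
  have "A = unit_diag_mat 0 n 0 0" by (rule eq_matI) (use 0 in \<open>auto simp: unit_diag_mat_def\<close>)
  then show ?case using equivalent_mat_refl[OF 0] by (intro exI[of _ 0]) auto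
next
  case (Suc m)
  show ?case
  proof (cases n)
    case 0
    have "A = unit_diag_mat (Suc m) n 0 0" by (rule eq_matI) (use 0 Suc in \<open>auto simp: unit_diag_mat_def\<close>)
    then show ?thesis using equivalent_mat_refl[OF Suc.prems] by (intro exI[of _ 0]) auto
  next
    case (Suc n')
    then have A: "A \<in> carrier_mat (Suc m) (Suc n')" using Suc.prems by simp
    show ?thesis
    proof (cases "\<exists>C. C \<in> carrier_mat m n' \<and> equivalent_mat (Suc m) (Suc n') A (one_block C)")
      case True
      then obtain C where C: "C \<in> carrier_mat m n'" "equivalent_mat (Suc m) (Suc n') A (one_block C)"
        by blast
      obtain k e where ke: "k \<le> min m n'" "equivalent_mat m n' C (unit_diag_mat m n' k e)"
        using Suc.IH[OF C(1)] by blast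
      have "equivalent_mat (Suc m) (Suc n') A
          (unit_diag_mat (Suc m) (Suc n') (Suc k) (if k = 0 then 1 else e))"
        using equivalent_mat_trans[OF C(2) equivalent_mat_one_block[OF ke(2)]]
        by (simp add: one_block_unit_diag_mat)
      then show ?thesis using ke(1) Suc by (intro exI[of _ "Suc k"]) auto
    next
      case False
      then show ?thesis using bezout_two_simple_reduction[OF bez ts A] Suc by auto
    qed
  qed
qed

section \<open>Two-sided ideals and the theorem\<close>

lemma two_sided_genI: "y = (\<Sum>i<(n::nat). r i * x * s i) \<Longrightarrow> y \<in> two_sided_gen x"
  unfolding two_sided_gen_def by blast

lemma two_sided_genE:
  assumes "y \<in> two_sided_gen x"
  obtains n :: nat and r s where "y = (\<Sum>i<n. r i * x * s i)"
  using assms unfolding two_sided_gen_def by blast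

lemma two_sided_gen_ideal: "two_sided_ideal (two_sided_gen (x::'a::ring_1))"
  unfolding two_sided_ideal_def
proof (intro conjI ballI allI)
  show "0 \<in> two_sided_gen x" by (rule two_sided_genI[where n = 0]) simp
next
  fix y z assume "y \<in> two_sided_gen x" "z \<in> two_sided_gen x"
  then obtain n1 n2 :: nat and r1 s1 r2 s2
    where y: "y = (\<Sum>i<n1. r1 i * x * s1 i)" and z: "z = (\<Sum>i<n2. r2 i * x * s2 i)"
    by (metis two_sided_genE)
  define r where "r i = (if i < n1 then r1 i else r2 (i - n1))" for i
  define s where "s i = (if i < n1 then s1 i else s2 (i - n1))" for i
  have "(\<Sum>i<n1 + n2. r i * x * s i) =
      (\<Sum>i\<in>{0..<n1}. r i * x * s i) + (\<Sum>i\<in>{0 + n1..<n2 + n1}. r i * x * s i)"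
    by (simp add: sum.atLeastLessThan_concat lessThan_atLeast0 add.commute)
  also have "\<dots> = y + z"
    unfolding sum.shift_bounds_nat_ivl y z by (simp add: r_def s_def lessThan_atLeast0)
  finally show "y + z \<in> two_sided_gen x" by (intro two_sided_genI) (rule sym)
next
  fix y assume "y \<in> two_sided_gen x"
  then obtain n :: nat and r s where "y = (\<Sum>i<n. r i * x * s i)" by (rule two_sided_genE)
  then have "- y = (\<Sum>i<n. (- r i) * x * s i)" by (simp add: sum_negf)
  then show "- y \<in> two_sided_gen x" by (rule two_sided_genI)
next
  fix y t assume "y \<in> two_sided_gen x"
  then obtain n :: nat and r s where y: "y = (\<Sum>i<n. r i * x * s i)" by (rule two_sided_genE)
  then have "t * y = (\<Sum>i<n. (t * r i) * x * s i)" by (simp add: sum_distrib_left mult.assoc)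
  then show "t * y \<in> two_sided_gen x" by (rule two_sided_genI)
  have "y * t = (\<Sum>i<n. r i * x * (s i * t))" using y by (simp add: sum_distrib_right mult.assoc)
  then show "y * t \<in> two_sided_gen x" by (rule two_sided_genI)
qed

lemma simple_ring_one_mem_two_sided_gen:
  assumes "simple_ring TYPE('a::ring_1)" "(y::'a) \<noteq> 0"
  shows "1 \<in> two_sided_gen y"
proof -
  have "y \<in> two_sided_gen y" by (rule two_sided_genI[where n = 1 and r = "\<lambda>_. 1" and s = "\<lambda>_. 1"]) simp
  then have "two_sided_gen y \<noteq> {0}" using assms(2) by auto
  then have "two_sided_gen y = UNIV"
    using assms(1) two_sided_gen_ideal[of y] unfolding simple_ring_def by blast
  then show ?thesis by simp
qed

lemma diag_mat2:
  "mat 2 2 (\<lambda>(i, j). if i = j \<and> i < k then e i else 0) =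
    mat2 (if 0 < k then e 0 else 0) 0 0 (if 1 < k then e 1 else (0::'a::ring_1))"
  by (rule eq_matI) (auto simp: mat2_def numeral_2_eq_2 less_Suc_eq)

lemma DK_imp_two_simple:
  assumes simple: "simple_ring TYPE('a::ring_1)" and dom: "is_domain TYPE('a)"
    and DK: "DK_elementary_divisor_ring TYPE('a)"
  shows "two_simple TYPE('a)"
  unfolding two_simple_def
proof (intro allI impI)
  fix a :: 'a assume "a \<noteq> 0"
  obtain P Q k and eps :: "nat \<Rightarrow> 'a" where PQ: "P \<in> carrier_mat 2 2" "Q \<in> carrier_mat 2 2"
    "invertible_mat P" "invertible_mat Q" "k \<le> min 2 2"
    "P * mat2 a 0 0 a * Q = mat 2 2 (\<lambda>(i, j). if i = j \<and> i < k then eps i else 0)"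
    and div: "\<forall>i. i + 1 < k \<longrightarrow> two_sided_gen (eps (i + 1)) \<subseteq> {eps i * r | r. True} \<inter> {r * eps i | r. True}"
    using DK[unfolded DK_elementary_divisor_ring_def, rule_format, OF mat2_carrier] by blast
  obtain p1 p2 p3 p4 where P: "P = mat2 p1 p2 p3 p4" using carrier_mat2_cases[OF PQ(1)] .
  obtain q1 q2 q3 q4 where Q: "Q = mat2 q1 q2 q3 q4" using carrier_mat2_cases[OF PQ(2)] .
  obtain p1' p2' p3' p4' where P': "mat2 p1' p2' p3' p4' * P = 1\<^sub>m 2"
    using invertible_mat2E[OF PQ(3,1)] by metis
  obtain q1' q2' q3' q4' where Q': "mat2 q1' q2' q3' q4' * Q = 1\<^sub>m 2"
    using invertible_mat2E[OF PQ(4,2)] by metis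
  let ?e0 = "if 0 < k then eps 0 else 0" and ?e1 = "if 1 < k then eps 1 else 0"
  have PAQ: "P * mat2 a 0 0 a * Q = mat2 ?e0 0 0 ?e1" using PQ(6) by (simp add: diag_mat2)
  have "1 < k \<and> eps 1 \<noteq> 0"
  proof (rule ccontr)
    assume "\<not> (1 < k \<and> eps 1 \<noteq> 0)"
    then have e1: "?e1 = 0" by auto
    have "mat2 a 0 0 a * Q = (mat2 p1' p2' p3' p4' * P) * mat2 a 0 0 a * Q"
      unfolding P' Q by simp
    also have "\<dots> = mat2 p1' p2' p3' p4' * (P * mat2 a 0 0 a * Q)"
      unfolding P Q by (simp add: mat2_mult algebra_simps)
    also have "\<dots> = mat2 (p1' * ?e0) 0 (p3' * ?e0) 0" unfolding PAQ e1 by (simp add: mat2_mult)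
    finally have "a * q2 = 0" "a * q4 = 0" unfolding Q by (simp_all add: mat2_mult mat2_eq_iff)
    then have "q2 = 0" "q4 = 0" using \<open>a \<noteq> 0\<close> by (simp_all add: domain_mult_eq_0_iff[OF dom])
    then show False using Q' domain_nontrivial[OF dom] unfolding Q by (simp add: mat2_mult_eq_one_mat_iff)
  qed
  then have "1 \<in> {eps 0 * r | r. True}"
    using div simple_ring_one_mem_two_sided_gen[OF simple] by fastforce
  then obtain r where r: "eps 0 * r = 1" by auto
  have "eps 0 = p1 * a * q1 + p2 * a * q3"
    using PAQ \<open>1 < k \<and> eps 1 \<noteq> 0\<close> unfolding P Q by (simp add: mat2_mult mat2_eq_iff)
  then have "p1 * a * (q1 * r) + p2 * a * (q3 * r) = 1"
    using r by (simp add: algebra_simps)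
  then show "\<exists>u1 u2 v1 v2. u1 * a * v1 + u2 * a * v2 = 1" by blast
qed

lemma two_simple_imp_DK:
  assumes bez: "bezout_domain TYPE('a::ring_1)" and ts: "two_simple TYPE('a)"
  shows "DK_elementary_divisor_ring TYPE('a)"
  unfolding DK_elementary_divisor_ring_def
proof (intro allI impI)
  fix m n and A :: "'a mat" assume A: "A \<in> carrier_mat m n"
  obtain k e where ke: "k \<le> min m n" "equivalent_mat m n A (unit_diag_mat m n k e)"
    using bezout_two_simple_equivalent_unit_diag_mat[OF bez ts A] by blast
  then obtain P Q where PQ: "P \<in> carrier_mat m m" "Q \<in> carrier_mat n n" "invertible_mat P"
    "invertible_mat Q" "unit_diag_mat m n k e = P * A * Q"
    unfolding equivalent_mat_def by blast
  define eps where "eps i = (if i + 1 < k then 1 else e)" for i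
  have "P * A * Q = mat m n (\<lambda>(i, j). if i = j \<and> i < k then eps i else 0)"
    unfolding PQ(5)[symmetric] unit_diag_mat_def eps_def ..
  moreover have "\<forall>i. i + 1 < k \<longrightarrow>
      two_sided_gen (eps (i + 1)) \<subseteq> {eps i * r | r. True} \<inter> {r * eps i | r. True}"
    by (auto simp: eps_def)
  moreover have "\<forall>i. i + 1 < k \<longrightarrow> invariant_elem (eps i)"
    using domain_nontrivial[OF bezout_domain_is_domain[OF bez]] by (auto simp: eps_def invariant_elem_def)
  ultimately show "\<exists>P Q k (eps::nat \<Rightarrow> 'a).
      P \<in> carrier_mat m m \<and> Q \<in> carrier_mat n n \<and> invertible_mat P \<and> invertible_mat Q \<and>
      k \<le> min m n \<and> P * A * Q = mat m n (\<lambda>(i, j). if i = j \<and> i < k then eps i else 0) \<and>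
      (\<forall>i. i + 1 < k \<longrightarrow>
        two_sided_gen (eps (i + 1)) \<subseteq> {eps i * r | r. True} \<inter> {r * eps i | r. True}) \<and>
      (\<forall>i. i + 1 < k \<longrightarrow> invariant_elem (eps i))"
    using PQ(1-4) ke(1) by blast
qed

theorem mainTheorem8:
  assumes "simple_ring TYPE('a::ring_1)"
    and "bezout_domain TYPE('a)"
  shows "DK_elementary_divisor_ring TYPE('a) \<longleftrightarrow>
    (\<forall>a::'a. a \<noteq> 0 \<longrightarrow> (\<exists>u1 u2 v1 v2. u1 * a * v1 + u2 * a * v2 = 1))"
  using DK_imp_two_simple[OF assms(1) bezout_domain_is_domain[OF assms(2)]] two_simple_imp_DK[OF assms(2)]
  unfolding two_simple_def by blast

end
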